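(* Let $N\ge1$, $\tau=T/N$, and assume that $Q$ commutes with $M$. Let $v,u_0\in(T_\tau Q^{1/2})(\mathbb V)$. Then there is a constant $C$ depending on $T$, $\|Q^{-1/2}v\|_{\mathcal D(M)}$ and $\|Q^{-1/2}u_0\|_{\mathcal D(M)}$ such that $$|I_T^{u_0}(v)-I_{T,N}^{u_0}(v)|\le C\tau^{1/2}.$$ If in addition $Q^{-1/2}v,\ Q^{-1/2}u_0\in\mathcal D(M^2)$, then there is a constant $C$ depending on $T$, $\|Q^{-1/2}v\|_{\mathcal D(M^2)}$ and $\|Q^{-1/2}u_0\|_{\mathcal D(M^2)}$ such that $|I_T^{u_0}(v)-I_{T,N}^{u_0}(v)|\le C\tau$.
   Context: $T>0$. $D\subset\mathbb R^3$ is a cuboid; $\varepsilon,\mu\in L^\infty(D)$ with $\varepsilon,\mu\ge\delta>0$. $\mathbb V=L^2(D)^3\times L^2(D)^3$ with inner product $\int_D(\varepsilon\mathbf E_1\cdot\mathbf E_2+\mu\mathbf H_1\cdot\mathbf H_2)\,\mathrm d\mathbf x$. $M(\mathbf E,\mathbf H)=(\varepsilon^{-1}\nabla\times\mathbf H,-\mu^{-1}\nabla\times\mathbf E)$ with domain $\mathcal D(M)=H_0(\mathrm{curl},D)\times H(\mathrm{curl},D)$ (perfect-conductor condition $\mathbf n\times\mathbf E=0$ on $\partial D$) is skew-adjoint on $\mathbb V$ and generates the unitary $C_0$-group $\{S(t)\}$; $\mathcal D(M^k)$ has graph norm $\|v\|^2_{\mathcal D(M^k)}=\sum_{j\le k}\|M^jv\|^2_{\mathbb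 V}$. $Q=\mathrm{diag}(\varepsilon^{-1}Q_e,\mu^{-1}Q_m)$ is a symmetric positive definite trace-class operator on $\mathbb V$ (the covariance of the noise); "$Q$ commutes with $M$" means $Q$ maps $\mathcal D(M)$ into itself and $QMw=MQw$ for $w\in\mathcal D(M)$. $Q^{-1/2}$ denotes the pseudo-inverse of $Q^{1/2}$. $T_\tau=(I-\frac\tau2M)^{-1}$, $S_\tau=(I-\frac\tau2M)^{-1}(I+\frac\tau2M)$. With $Q_T=\int_0^TS(r)QS(r)^*\,\mathrm dr$ and $Q_{T;N}=\tau\sum_{j=1}^N(S_\tau^{N-j}T_\tau)Q(S_\tau^{N-j}T_\tau)^*$ (pseudo-inverses of their square roots denoted by exponent $-1/2$), the rate functions are $I_T^{u_0}(v)=\frac12\|Q_T^{-1/2}(v-S(T)u_0)\|_{\mathbb V}^2$ if $v-S(T)u_0\in Q_T^{1/2}(\mathbb V)$ and $+\infty$ otherwise, and $I_{T,N}^{u_0}(v)=\frac12\|Q_{T;N}^{-1/2}(v-S_\tau^Nu_0)\|_{\mathbb V}^2$ if $v-S_\tau^Nu_0\in Q_{T;N}^{1/2}(\mathbb V)$ and $+\infty$ otherwise (these are the large deviation rate functions of the exact solution at time $T$ and of the midpoint approximation $u^N$ for the noise $\sqrt\lambda W$, $\lambda\to0$). *)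

theory Defs
  imports "HOL-Analysis.Analysis" "HOL-Library.Extended_Real"
begin

text \<open>Abstract setting: the real Hilbert space V is a type 'v of class real_inner + complete_space
(its inner product plays the role of the weighted L2 inner product).  The unbounded operator M is
given by its domain DM and a function M (values outside DM are irrelevant).\<close>

definition skew_adjoint :: "('v::{real_inner,complete_space} \<Rightarrow> 'v) \<Rightarrow> 'v set \<Rightarrow> bool" where
  "skew_adjoint M DM \<longleftrightarrow>
     subspace DM \<and> closure DM = UNIV \<and>
     (\<forall>x\<in>DM. \<forall>y\<in>DM. M (x + y) = M x + M y) \<and>
     (\<forall>x\<in>DM. \<forall>c. M (c *\<^sub>R x) = c *\<^sub>R M x) \<and>
     (\<forall>y. y \<in> DM \<longleftrightarrow> (\<exists>z. \<forall>x\<in>DM. inner (M x) y = inner x z)) \<and>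
     (\<forall>x\<in>DM. \<forall>y\<in>DM. inner (M x) y = - inner x (M y))"

definition unitary_group_generated_by ::
  "(real \<Rightarrow> 'v::{real_inner,complete_space} \<Rightarrow> 'v) \<Rightarrow> ('v \<Rightarrow> 'v) \<Rightarrow> 'v set \<Rightarrow> bool" where
  "unitary_group_generated_by S M DM \<longleftrightarrow>
     (\<forall>t. bounded_linear (S t)) \<and> S 0 = id \<and> (\<forall>s t. S (s + t) = S s \<circ> S t) \<and>
     (\<forall>t x. norm (S t x) = norm x) \<and>
     (\<forall>x. continuous_on UNIV (\<lambda>t. S t x)) \<and>
     (\<forall>x. x \<in> DM \<longleftrightarrow> (\<exists>y. ((\<lambda>h. (1 / h) *\<^sub>R (S h x - x)) \<longlongrightarrow> y) (at_right 0))) \<and>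
     (\<forall>x\<in>DM. ((\<lambda>h. (1 / h) *\<^sub>R (S h x - x)) \<longlongrightarrow> M x) (at_right 0))"

definition adj :: "('v::{real_inner,complete_space} \<Rightarrow> 'v) \<Rightarrow> 'v \<Rightarrow> 'v" where
  "adj A y = (THE z. \<forall>x. inner (A x) y = inner x z)"

definition symmetric_op :: "('v::real_inner \<Rightarrow> 'v) \<Rightarrow> bool" where
  "symmetric_op A \<longleftrightarrow> (\<forall>x y. inner (A x) y = inner x (A y))"

definition pos_def_op :: "('v::real_inner \<Rightarrow> 'v) \<Rightarrow> bool" where
  "pos_def_op A \<longleftrightarrow> (\<forall>x. x \<noteq> 0 \<longrightarrow> inner (A x) x > 0)"

text \<open>Orthonormal (Hilbert) basis and trace class for a positive operator:
  the trace sum over some orthonormal basis is finite (basis-independent for positive operators).\<close>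
definition hilbert_basis :: "'v::real_inner set \<Rightarrow> bool" where
  "hilbert_basis B \<longleftrightarrow> (\<forall>e\<in>B. norm e = 1) \<and> (\<forall>e\<in>B. \<forall>f\<in>B. e \<noteq> f \<longrightarrow> inner e f = 0)
      \<and> closure (span B) = UNIV"

definition trace_class_pos :: "('v::real_inner \<Rightarrow> 'v) \<Rightarrow> bool" where
  "trace_class_pos A \<longleftrightarrow> (\<exists>B. hilbert_basis B \<and> (\<lambda>e. inner (A e) e) summable_on B)"

definition op_sqrt :: "('v::{real_inner,complete_space} \<Rightarrow> 'v) \<Rightarrow> 'v \<Rightarrow> 'v" where
  "op_sqrt A = (THE R. bounded_linear R \<and> symmetric_op R \<and> (\<forall>x. inner (R x) x \<ge> 0)
                 \<and> (\<forall>x. R (R x) = A x))"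

definition pinv :: "('v::real_inner \<Rightarrow> 'v) \<Rightarrow> 'v \<Rightarrow> 'v" where
  "pinv R w = (THE x. R x = w \<and> (\<forall>y. R y = 0 \<longrightarrow> inner x y = 0))"

definition commutes_with :: "('v \<Rightarrow> 'v) \<Rightarrow> ('v \<Rightarrow> 'v) \<Rightarrow> 'v set \<Rightarrow> bool" where
  "commutes_with Q M DM \<longleftrightarrow> Q ` DM \<subseteq> DM \<and> (\<forall>w\<in>DM. Q (M w) = M (Q w))"

definition Ttau :: "('v::real_vector \<Rightarrow> 'v) \<Rightarrow> 'v set \<Rightarrow> real \<Rightarrow> 'v \<Rightarrow> 'v" where
  "Ttau M DM \<tau> x = (THE y. y \<in> DM \<and> y - (\<tau> / 2) *\<^sub>R M y = x)"

definition Stau :: "('v::real_vector \<Rightarrow> 'v) \<Rightarrow> 'v set \<Rightarrow> real \<Rightarrow> 'v \<Rightarrow> 'v" where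
  "Stau M DM \<tau> x = Ttau M DM \<tau> (x + (\<tau> / 2) *\<^sub>R M x)"

definition QT :: "(real \<Rightarrow> 'v::{real_inner,complete_space} \<Rightarrow> 'v) \<Rightarrow> ('v \<Rightarrow> 'v) \<Rightarrow> real \<Rightarrow> 'v \<Rightarrow> 'v" where
  "QT S Q T x = integral {0..T} (\<lambda>r. S r (Q (adj (S r) x)))"

definition QTN :: "('v::{real_inner,complete_space} \<Rightarrow> 'v) \<Rightarrow> 'v set \<Rightarrow> ('v \<Rightarrow> 'v) \<Rightarrow> real \<Rightarrow> nat \<Rightarrow> 'v \<Rightarrow> 'v" where
  "QTN M DM Q T N x =
     (let \<tau> = T / real N;
          A = (\<lambda>j. (Stau M DM \<tau> ^^ (N - j)) \<circ> Ttau M DM \<tau>)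
      in \<tau> *\<^sub>R (\<Sum>j=1..N. A j (Q (adj (A j) x))))"

definition rate :: "('v::real_inner \<Rightarrow> 'v) \<Rightarrow> 'v \<Rightarrow> ereal" where
  "rate R w = (if w \<in> range R then ereal ((1/2) * (norm (pinv R w))\<^sup>2) else \<infinity>)"

definition rate_exact :: "(real \<Rightarrow> 'v::{real_inner,complete_space} \<Rightarrow> 'v) \<Rightarrow> ('v \<Rightarrow> 'v) \<Rightarrow> real \<Rightarrow> 'v \<Rightarrow> 'v \<Rightarrow> ereal" where
  "rate_exact S Q T u0 v = rate (op_sqrt (QT S Q T)) (v - S T u0)"

definition rate_midpoint :: "('v::{real_inner,complete_space} \<Rightarrow> 'v) \<Rightarrow> 'v set \<Rightarrow> ('v \<Rightarrow> 'v) \<Rightarrow> real \<Rightarrow> nat \<Rightarrow> 'v \<Rightarrow> 'v \<Rightarrow> ereal" where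
  "rate_midpoint M DM Q T N u0 v =
     rate (op_sqrt (QTN M DM Q T N)) (v - (Stau M DM (T / real N) ^^ N) u0)"

definition graph_norm1 :: "('v::real_normed_vector \<Rightarrow> 'v) \<Rightarrow> 'v \<Rightarrow> real" where
  "graph_norm1 M x = sqrt ((norm x)\<^sup>2 + (norm (M x))\<^sup>2)"

definition graph_norm2 :: "('v::real_normed_vector \<Rightarrow> 'v) \<Rightarrow> 'v \<Rightarrow> real" where
  "graph_norm2 M x = sqrt ((norm x)\<^sup>2 + (norm (M x))\<^sup>2 + (norm (M (M x)))\<^sup>2)"

definition dom_M2 :: "('v \<Rightarrow> 'v) \<Rightarrow> 'v set \<Rightarrow> 'v set" where
  "dom_M2 M DM = {x \<in> DM. M x \<in> DM}"

end

theory Submission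
  imports Defs
begin

text \<open>Since \<open>Q\<close> commutes with \<open>M\<close>, it commutes with the resolvents \<open>T\<^sub>\<tau>\<close>, the Cayley transforms
  \<open>S\<^sub>\<tau>\<close> and, by convergence of the Crank--Nicolson scheme, with the group \<open>S(t)\<close>. Hence
  \<open>Q\<^sub>T = T Q\<close> and \<open>Q\<^sub>T\<^sub>;\<^sub>N = T T\<^sub>\<tau> Q T\<^sub>\<tau>\<^sup>*\<close>, and both rate functions are explicit: writing
  \<open>v = Q\<^sup>1\<^sup>/\<^sup>2 a\<close>, \<open>u\<^sub>0 = Q\<^sup>1\<^sup>/\<^sup>2 b\<close>, one gets \<open>I\<^sub>T = |a - S(T) b|^2 / (2T)\<close> and
  \<open>I\<^sub>T\<^sub>,\<^sub>N = (|d|^2 + (\<tau>/2)^2 |M d|^2) / (2T)\<close> with \<open>d = a - S\<^sub>\<tau>\<^sup>N b\<close>. Their difference is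
  controlled by the Crank--Nicolson error \<open>|S(T) b - S\<^sub>\<tau>\<^sup>N b|\<close>, which is \<open>O(\<tau> |M^2 b|)\<close> for
  \<open>b \<in> D(M^2)\<close> and, after smoothing \<open>b\<close> by a resolvent at scale \<open>\<surd>\<tau>\<close>, \<open>O(\<surd>\<tau> |M b|)\<close>
  for \<open>b \<in> D(M)\<close>.\<close>

section \<open>Positive operators and iterates\<close>

definition pos_op :: "('v::real_inner \<Rightarrow> 'v) \<Rightarrow> bool" where
  "pos_op A \<longleftrightarrow> (\<forall>x. 0 \<le> inner (A x) x)"

lemma nonneg_quadratic_discriminant:
  fixes a b c :: real
  assumes nonneg: "\<And>t. 0 \<le> a + 2*b*t + c*t^2" and c0: "0 \<le> c"
  shows "b^2 \<le> a*c"
proof (cases "c = 0")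
  case True
  show ?thesis
  proof (cases "b = 0")
    case True then show ?thesis using nonneg[of 0] c0 by simp
  next
    case False
    have "0 \<le> a + 2*b*(-(a+1)/(2*b)) + c*(-(a+1)/(2*b))^2" by (rule nonneg)
    then show ?thesis using False \<open>c = 0\<close> by (simp add: field_simps)
  qed
next
  case False
  then have cp: "c > 0" using c0 by simp
  have "0 \<le> a + 2*b*(-b/c) + c*(-b/c)^2" by (rule nonneg)
  also have "\<dots> = a - b^2/c" using cp by (simp add: field_simps power2_eq_square)
  finally have "b^2/c \<le> a" by simp
  then show ?thesis using cp by (simp add: field_simps mult.commute)
qed

lemma pos_op_cauchy_schwarz:
  assumes bl: "bounded_linear A" and sy: "symmetric_op A" and po: "pos_op A"
  shows "(inner (A x) y)^2 \<le> inner (A x) x * inner (A y) y"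
proof (rule nonneg_quadratic_discriminant)
  interpret A: bounded_linear A by (rule bl)
  have sym: "inner (A y) x = inner (A x) y"
    using sy unfolding symmetric_op_def by (metis inner_commute)
  fix t :: real
  have "0 \<le> inner (A (x + t *\<^sub>R y)) (x + t *\<^sub>R y)" using po unfolding pos_op_def by blast
  also have "\<dots> = inner (A x) x + 2 * inner (A x) y * t + inner (A y) y * t^2"
    by (simp add: A.add A.scaleR inner_add_left inner_add_right sym power2_eq_square algebra_simps)
  finally show "0 \<le> inner (A x) x + 2 * inner (A x) y * t + inner (A y) y * t^2" .
next
  show "0 \<le> inner (A y) y" using po unfolding pos_op_def by blast
qed

lemma pos_op_form_eq_0_imp:
  assumes "bounded_linear A" "symmetric_op A" "pos_op A" and "inner (A x) x = 0"
  shows "A x = 0"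
  using pos_op_cauchy_schwarz[OF assms(1-3), of x "A x"] assms(4) by simp

lemma pos_op_le_id_imp_contraction:
  assumes bl: "bounded_linear A" and sy: "symmetric_op A" and po: "pos_op A"
    and le: "\<And>x. inner (A x) x \<le> inner x x"
  shows "norm (A x) \<le> norm x"
proof (cases "A x = 0")
  case False
  have "(inner (A x) (A x))^2 \<le> inner (A x) x * inner (A (A x)) (A x)"
    by (rule pos_op_cauchy_schwarz[OF bl sy po])
  also have "\<dots> \<le> inner x x * inner (A x) (A x)"
    using le[of x] le[of "A x"] po unfolding pos_op_def by (intro mult_mono) auto
  finally have "(norm (A x))^2 * (norm (A x))^2 \<le> (norm x)^2 * (norm (A x))^2"
    by (simp only: power2_norm_eq_inner[symmetric] power2_eq_square)
  moreover have "0 < (norm (A x))^2" using False by simp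
  ultimately have "(norm (A x))^2 \<le> (norm x)^2" using mult_le_cancel_right_pos by blast
  then show ?thesis by (simp add: power2_le_iff_abs_le)
qed simp

lemma funpow_commute:
  "(\<And>x. K (f x) = f (K x)) \<Longrightarrow> K ((f ^^ k) x) = (f ^^ k) (K x)"
  by (induction k) simp_all

lemma funpow_left_inverse:
  fixes f :: "'a \<Rightarrow> 'a"
  assumes "\<And>x. g (f x) = x"
  shows "(g ^^ k) ((f ^^ k) x) = x"
proof (induction k arbitrary: x)
  case (Suc k)
  have "(g ^^ Suc k) ((f ^^ Suc k) x) = (g ^^ k) (g ((f ^^ Suc k) x))"
    by (simp only: funpow_Suc_right o_apply)
  also have "\<dots> = (g ^^ k) (g (f ((f ^^ k) x)))" by simp
  finally show ?case using Suc assms by simp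
qed simp

lemma bounded_linear_funpow:
  fixes f :: "'a::real_normed_vector \<Rightarrow> 'a"
  assumes "bounded_linear f"
  shows "bounded_linear (f ^^ k)"
proof (induction k)
  case 0 then show ?case by (simp add: id_def bounded_linear_ident)
next
  case (Suc k) then show ?case by (simp add: o_def bounded_linear_compose[OF assms])
qed

lemma norm_funpow_eq:
  fixes f :: "'a::real_normed_vector \<Rightarrow> 'a"
  shows "(\<And>x. norm (f x) = norm x) \<Longrightarrow> norm ((f ^^ k) x) = norm x"
  by (induction k) simp_all

lemma norm_funpow_le:
  fixes f :: "'a::real_normed_vector \<Rightarrow> 'a"
  shows "(\<And>x. norm (f x) \<le> norm x) \<Longrightarrow> norm ((f ^^ k) x) \<le> norm x"
  by (induction k) (simp_all, metis order_trans)

lemma inner_funpow_adjoint: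
  fixes f g :: "'a::real_inner \<Rightarrow> 'a"
  assumes "\<And>x y. inner (f x) y = inner x (g y)"
  shows "inner ((f ^^ k) x) y = inner x ((g ^^ k) y)"
proof (induction k arbitrary: y)
  case (Suc k)
  have "inner ((f ^^ Suc k) x) y = inner ((f ^^ k) x) (g y)" by (simp add: assms)
  also have "\<dots> = inner x ((g ^^ Suc k) y)" by (simp add: Suc funpow_swap1)
  finally show ?case .
qed simp

section \<open>Orthogonal projection and density\<close>

lemma norm_parallelogram:
  fixes a b :: "'v::real_inner"
  shows "(norm (a + b))^2 + (norm (a - b))^2 = 2*(norm a)^2 + 2*(norm b)^2"
  by (simp add: power2_norm_eq_inner inner_add_left inner_add_right inner_diff_left
      inner_diff_right inner_commute)

lemma norm_diff_sq_le_midpoint: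
  fixes z p q :: "'v::real_inner"
  assumes "d \<le> norm (z - (1/2) *\<^sub>R (p + q))" and "0 \<le> d"
  shows "(norm (p - q))^2 \<le> 2*(norm (z - p))^2 + 2*(norm (z - q))^2 - 4*d^2"
proof -
  have "(z - p) + (z - q) = 2 *\<^sub>R (z - (1/2) *\<^sub>R (p + q))"
    by (simp add: scaleR_right_diff_distrib scaleR_2)
  then have "(2*d)^2 \<le> (norm ((z - p) + (z - q)))^2"
    using assms by (simp add: power_mono)
  moreover have "(z - p) - (z - q) = - (p - q)" by simp
  ultimately show ?thesis using norm_parallelogram[of "z - p" "z - q"] by (simp add: norm_minus_commute)
qed

lemma Cauchy_if_norm_diff_sq_le:
  fixes p :: "nat \<Rightarrow> 'a::real_normed_vector"
  assumes diff_sq: "\<And>m n. (norm (p m - p n))^2 \<le> 2/(real m + 1) + 2/(real n + 1)"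
  shows "Cauchy p"
proof (rule CauchyI)
  fix e :: real assume e: "0 < e"
  obtain K :: nat where K: "4 / e^2 < real K" using reals_Archimedean2 by blast
  have "norm (p m - p n) < e" if "K \<le> m" "K \<le> n" for m n
  proof -
    have "2/(real m + 1) \<le> 2/(real K + 1)" "2/(real n + 1) \<le> 2/(real K + 1)"
      using that by (simp_all add: frac_le)
    then have "2/(real m + 1) + 2/(real n + 1) \<le> 4/(real K + 1)" by simp
    also have "\<dots> < e^2"
    proof -
      have "4 < e^2 * real K" using K e by (simp add: field_simps)
      moreover have "0 < e^2" using e by simp
      ultimately have "4 < e^2 * real K + e^2" by linarith
      then have "4 < e^2 * (real K + 1)" by (simp add: distrib_left)
      then show ?thesis by (simp add: field_simps)
    qed
    finally have "(norm (p m - p n))^2 < e^2" using diff_sq[of m n] by linarith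
    then show ?thesis using e by (simp add: power_less_imp_less_base)
  qed
  then show "\<exists>K. \<forall>m\<ge>K. \<forall>n\<ge>K. norm (p m - p n) < e" by blast
qed

text \<open>A minimizing sequence is Cauchy by the parallelogram law: midpoints stay in \<open>L\<close> by
  convexity, so they are no closer to \<open>z\<close> than the infimal distance.\<close>

lemma nearest_point_exists:
  fixes L :: "'v::{real_inner,complete_space} set"
  assumes cvx: "convex L" and cl: "closed L" and ne: "L \<noteq> {}"
  shows "\<exists>p\<in>L. \<forall>l\<in>L. norm (z - p) \<le> norm (z - l)"
proof -
  define d where "d = infdist z L"
  have d0: "0 \<le> d" unfolding d_def by (rule infdist_nonneg)
  have dle: "d \<le> norm (z - l)" if "l \<in> L" for l
    using infdist_le[OF that, of z] by (simp add: d_def dist_norm)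
  have near: "\<exists>l\<in>L. (norm (z - l))^2 < d^2 + e" if e: "e > 0" for e
  proof (rule ccontr)
    assume "\<not> ?thesis"
    then have "d^2 + e \<le> (dist z l)^2" if "l \<in> L" for l
      using that by (auto simp: dist_norm not_less)
    then have "\<forall>l\<in>L. sqrt (d^2 + e) \<le> dist z l" by (simp add: real_le_lsqrt)
    then have "sqrt (d^2 + e) \<le> d"
      unfolding d_def infdist_notempty[OF ne] by (intro cINF_greatest ne) auto
    moreover have "d < sqrt (d^2 + e)" using e d0 by (simp add: real_less_rsqrt)
    ultimately show False by simp
  qed
  have "\<forall>n::nat. \<exists>l\<in>L. (norm (z - l))^2 < d^2 + 1/(real n + 1)"
    using near by simp
  then obtain p where pL: "\<And>n. p n \<in> L" and pn: "\<And>n. (norm (z - p n))^2 < d^2 + 1/(real n + 1)"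
    by metis
  have diff_sq: "(norm (p m - p n))^2 \<le> 2/(real m + 1) + 2/(real n + 1)" for m n
  proof -
    have "(1/2) *\<^sub>R (p m + p n) \<in> L"
      using convexD[OF cvx pL pL, of "1/2" "1/2"] by (simp add: scaleR_right_distrib)
    then have "(norm (p m - p n))^2 \<le> 2*(norm (z - p m))^2 + 2*(norm (z - p n))^2 - 4*d^2"
      by (intro norm_diff_sq_le_midpoint dle d0)
    then show ?thesis using pn[of m] pn[of n] by simp
  qed
  have "Cauchy p" by (rule Cauchy_if_norm_diff_sq_le[OF diff_sq])
  then obtain p0 where lim: "p \<longlonglongrightarrow> p0" using Cauchy_convergent_iff convergent_def by blast
  have p0L: "p0 \<in> L" using cl pL lim closed_sequentially by blast
  have "(norm (z - p0))^2 \<le> d^2 + 0"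
  proof (rule LIMSEQ_le)
    show "(\<lambda>n. (norm (z - p n))^2) \<longlonglongrightarrow> (norm (z - p0))^2" by (intro tendsto_intros lim)
    show "(\<lambda>n. d^2 + 1/(real n + 1)) \<longlonglongrightarrow> d^2 + 0"
      using LIMSEQ_Suc[OF lim_inverse_n'] by (intro tendsto_intros) (simp add: add.commute)
  qed (use pn less_imp_le in blast)
  then have "norm (z - p0) \<le> d" using d0 by (simp add: power2_le_iff_abs_le)
  then show ?thesis using p0L dle by (meson order_trans)
qed

lemma nearest_point_orthogonal:
  fixes L :: "'v::real_inner set"
  assumes sL: "subspace L" and pL: "p \<in> L" and near: "\<And>l. l \<in> L \<Longrightarrow> norm (z - p) \<le> norm (z - l)"
    and lL: "l \<in> L"
  shows "inner (z - p) l = 0"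
proof -
  have "(- inner (z - p) l)^2 \<le> 0 * inner l l"
  proof (rule nonneg_quadratic_discriminant)
    fix t :: real
    have "p + t *\<^sub>R l \<in> L" using pL lL sL by (simp add: subspace_add subspace_scale)
    then have "norm (z - p) \<le> norm (z - (p + t *\<^sub>R l))" by (rule near)
    then have "(norm (z - p))^2 \<le> (norm ((z - p) - t *\<^sub>R l))^2"
      by (simp add: power_mono diff_diff_eq)
    also have "\<dots> = (norm (z - p))^2 + 2 * (- inner (z - p) l) * t + inner l l * t^2"
      unfolding power2_norm_eq_inner
      by (simp add: inner_diff_left inner_diff_right inner_commute power2_eq_square algebra_simps)
    finally show "0 \<le> 0 + 2 * (- inner (z - p) l) * t + inner l l * t^2" by simp
  qed simp
  then show ?thesis by simp
qed

lemma subspace_closure: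
  fixes L :: "'v::real_normed_vector set"
  assumes sL: "subspace L"
  shows "subspace (closure L)"
  unfolding subspace_def
proof (intro conjI ballI allI)
  show "0 \<in> closure L" using sL subspace_0 closure_subset by blast
next
  fix x y assume "x \<in> closure L" "y \<in> closure L"
  then obtain a b where a: "\<And>n. a n \<in> L" "a \<longlonglongrightarrow> x" and b: "\<And>n. b n \<in> L" "b \<longlonglongrightarrow> y"
    unfolding closure_sequential by blast
  have "(\<lambda>n. a n + b n) \<longlonglongrightarrow> x + y" by (intro tendsto_intros a b)
  then show "x + y \<in> closure L" unfolding closure_sequential
    using a b sL by (intro exI[where x="\<lambda>n. a n + b n"]) (simp add: subspace_add)
next
  fix c :: real and x assume "x \<in> closure L"
  then obtain a where a: "\<And>n. a n \<in> L" "a \<longlonglongrightarrow> x" unfolding closure_sequential by blast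
  have "(\<lambda>n. c *\<^sub>R a n) \<longlonglongrightarrow> c *\<^sub>R x" by (intro tendsto_intros a)
  then show "c *\<^sub>R x \<in> closure L" unfolding closure_sequential
    using a sL by (intro exI[where x="\<lambda>n. c *\<^sub>R a n"]) (simp add: subspace_scale)
qed

lemma dense_if_orthogonal_complement_trivial:
  fixes L :: "'v::{real_inner,complete_space} set"
  assumes sL: "subspace L" and orth: "\<And>z. (\<forall>l\<in>L. inner z l = 0) \<Longrightarrow> z = 0"
  shows "closure L = UNIV"
proof -
  have sC: "subspace (closure L)" using sL by (rule subspace_closure)
  have "z \<in> closure L" for z
  proof -
    have "closure L \<noteq> {}" using subspace_0[OF sC] by (metis empty_iff)
    then obtain p where pL: "p \<in> closure L" and near: "\<forall>l\<in>closure L. norm (z - p) \<le> norm (z - l)"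
      using nearest_point_exists[OF subspace_imp_convex[OF sC] closed_closure] by blast
    have "\<forall>l\<in>L. inner (z - p) l = 0"
      using nearest_point_orthogonal[OF sC pL, of z] near closure_subset by blast
    then have "z - p = 0" by (rule orth)
    then show ?thesis using pL by simp
  qed
  then show ?thesis by auto
qed

lemma orthogonal_to_dense_imp_0:
  fixes D :: "'v::real_inner set"
  assumes d: "closure D = UNIV" and o: "\<And>y. y \<in> D \<Longrightarrow> inner y z = 0"
  shows "z = 0"
proof -
  obtain s where s: "\<And>n. s n \<in> D" and sl: "s \<longlonglongrightarrow> z"
    using d closure_sequential by (metis UNIV_I)
  have "(\<lambda>n. inner (s n) z) \<longlonglongrightarrow> inner z z" by (intro tendsto_intros sl)
  moreover have "(\<lambda>n. inner (s n) z) = (\<lambda>n. 0)" using o s by simp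
  ultimately have "inner z z = 0" using LIMSEQ_const_iff by metis
  then show ?thesis by simp
qed

section \<open>Square roots of positive operators\<close>

text \<open>The coefficients of \<open>1 - sqrt (1 - x) = (\<Sum>k. sqrt_coeff k * x ^ k)\<close>: writing \<open>s\<close> for this
  series, \<open>(1 - s)^2 = 1 - x\<close> means \<open>s^2 = 2 s - x\<close>, and comparing coefficients gives the recursion.\<close>

fun sqrt_coeff :: "nat \<Rightarrow> real" where
  "sqrt_coeff k = (if k = 0 then 0 else if k = 1 then 1/2
            else (1/2) * (\<Sum>i\<in>{1..<k}. sqrt_coeff i * sqrt_coeff (k - i)))"

declare sqrt_coeff.simps[simp del]

lemma sqrt_coeff_0[simp]: "sqrt_coeff 0 = 0"
  and sqrt_coeff_1[simp]: "sqrt_coeff (Suc 0) = 1/2"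
  by (simp_all add: sqrt_coeff.simps)

lemma sqrt_coeff_nonneg: "0 \<le> sqrt_coeff k"
proof (induction k rule: less_induct)
  case (less k)
  show ?case
  proof (cases "k \<le> 1")
    case True then show ?thesis by (cases k) auto
  next
    case False
    then have "sqrt_coeff k = (1/2) * (\<Sum>i\<in>{1..<k}. sqrt_coeff i * sqrt_coeff (k - i))"
      by (simp add: sqrt_coeff.simps)
    also have "\<dots> \<ge> 0" using less by (intro mult_nonneg_nonneg sum_nonneg) auto
    finally show ?thesis by simp
  qed
qed

lemma sqrt_coeff_convolution:
  "(\<Sum>i\<le>k. sqrt_coeff i * sqrt_coeff (k - i)) = 2 * sqrt_coeff k - (if k = 1 then 1 else 0)"
proof (cases "k \<le> 1")
  case True then show ?thesis by (cases k) auto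
next
  case False
  then have "{..k} = insert 0 (insert k {1..<k})" by auto
  then have "(\<Sum>i\<le>k. sqrt_coeff i * sqrt_coeff (k - i))
      = (\<Sum>i\<in>{1..<k}. sqrt_coeff i * sqrt_coeff (k - i))"
    using False by simp
  also have "\<dots> = 2 * sqrt_coeff k" using False by (simp add: sqrt_coeff.simps[of k])
  finally show ?thesis using False by simp
qed

definition sqrt_coeff_sum :: "nat \<Rightarrow> real" where
  "sqrt_coeff_sum n = (\<Sum>k\<le>n. sqrt_coeff k)"

lemma sum_sqrt_coeff_triangle:
  "(\<Sum>(i,j)\<in>{(i,j). i+j \<le> n}. sqrt_coeff i * sqrt_coeff j)
     = 2 * sqrt_coeff_sum n - (if n \<ge> 1 then 1 else 0)"
proof -
  have "(\<Sum>(i,j)\<in>{(i,j). i+j \<le> n}. sqrt_coeff i * sqrt_coeff j)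
      = (\<Sum>k\<le>n. \<Sum>i\<le>k. sqrt_coeff i * sqrt_coeff (k - i))"
    by (rule sum.triangle_reindex_eq)
  also have "\<dots> = (\<Sum>k\<le>n. 2 * sqrt_coeff k - (if k = 1 then 1 else 0))"
    by (simp add: sqrt_coeff_convolution)
  also have "\<dots> = 2 * sqrt_coeff_sum n - (\<Sum>k\<le>n. (if k = 1 then 1 else 0))"
    by (simp add: sum_subtractf sum_distrib_left sqrt_coeff_sum_def)
  also have "(\<Sum>k\<le>n. (if k = 1 then 1 else 0)) = (if n \<ge> 1 then 1 else (0::real))"
    by (simp add: sum.delta)
  finally show ?thesis .
qed

lemma sum_sqrt_coeff_square:
  "(\<Sum>(i,j)\<in>{..n}\<times>{..n}. sqrt_coeff i * sqrt_coeff j) = (sqrt_coeff_sum n)^2"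
  by (simp add: sqrt_coeff_sum_def power2_eq_square sum_product sum.cartesian_product)

lemma sqrt_coeff_sum_nonneg: "0 \<le> sqrt_coeff_sum n"
  unfolding sqrt_coeff_sum_def by (intro sum_nonneg sqrt_coeff_nonneg)

text \<open>The square \<open>{..n} \<times> {..n}\<close> contains the shifted triangle \<open>i + j \<le> n + 1\<close>, \<open>i, j \<ge> 1\<close>,
  which carries the whole triangle sum because \<open>sqrt_coeff 0 = 0\<close>.\<close>

lemma sqrt_coeff_sum_le_1: "sqrt_coeff_sum n \<le> 1"
proof (induction n)
  case 0 then show ?case by (simp add: sqrt_coeff_sum_def)
next
  case (Suc n)
  let ?f = "\<lambda>(i,j). sqrt_coeff i * sqrt_coeff j"
  let ?P = "{(i,j). i+j \<le> Suc n}"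
  have finP: "finite ?P"
    by (rule finite_subset[of _ "{..Suc n}\<times>{..Suc n}"]) auto
  have "sum ?f ?P = sum ?f (?P \<inter> {(i,j). 1 \<le> i \<and> 1 \<le> j})"
    by (rule sum.mono_neutral_right) (use finP in \<open>auto simp: Suc_le_eq intro!: Nat.gr0I\<close>)
  also have "\<dots> \<le> sum ?f ({..n}\<times>{..n})"
    by (rule sum_mono2) (auto intro: mult_nonneg_nonneg sqrt_coeff_nonneg)
  also have "\<dots> = (sqrt_coeff_sum n)^2" by (rule sum_sqrt_coeff_square)
  also have "\<dots> \<le> 1" using Suc.IH sqrt_coeff_sum_nonneg[of n] by (simp add: power_le_one)
  finally have "2 * sqrt_coeff_sum (Suc n) - 1 \<le> 1" using sum_sqrt_coeff_triangle[of "Suc n"] by simp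
  then show ?case by simp
qed

lemma summable_sqrt_coeff: "summable sqrt_coeff"
proof (rule summableI_nonneg_bounded[where x=1])
  show "0 \<le> sqrt_coeff n" for n by (rule sqrt_coeff_nonneg)
  show "sum sqrt_coeff {..<n} \<le> 1" for n
  proof (cases n)
    case (Suc m)
    then have "{..<n} = {..m}" by auto
    then show ?thesis using sqrt_coeff_sum_le_1[of m] by (simp add: sqrt_coeff_sum_def)
  qed simp
qed

lemma sqrt_coeff_sum_tendsto_1: "sqrt_coeff_sum \<longlonglongrightarrow> 1"
proof -
  have abs: "summable (\<lambda>k. norm (sqrt_coeff k))" using summable_sqrt_coeff sqrt_coeff_nonneg by simp
  have "suminf sqrt_coeff * suminf sqrt_coeff = (\<Sum>k. \<Sum>i\<le>k. sqrt_coeff i * sqrt_coeff (k - i))"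
    by (rule Cauchy_product[OF abs abs])
  also have "\<dots> = (\<Sum>k. 2 * sqrt_coeff k - (if k = 1 then 1 else 0))"
    by (simp add: sqrt_coeff_convolution)
  also have "\<dots> = 2 * suminf sqrt_coeff - 1"
  proof (rule sums_unique[symmetric])
    have "(\<lambda>k. if k = 1 then 1 else (0::real)) sums 1"
      using sums_single[of 1 "\<lambda>_. 1::real"] by simp
    then show "(\<lambda>k. 2 * sqrt_coeff k - (if k = 1 then 1 else 0)) sums (2 * suminf sqrt_coeff - 1)"
      by (intro sums_diff sums_mult summable_sums summable_sqrt_coeff)
  qed
  finally have "(suminf sqrt_coeff - 1)^2 = 0" by (simp add: power2_eq_square algebra_simps)
  then have "suminf sqrt_coeff = 1" by simp
  then show ?thesis
    using summable_LIMSEQ'[OF summable_sqrt_coeff] unfolding sqrt_coeff_sum_def by simp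
qed

text \<open>The comparison test of the library needs the class \<open>banach\<close>, which the sort
  \<open>{real_inner, complete_space}\<close> does not provide.\<close>

lemma summable_comparison_complete:
  fixes f :: "nat \<Rightarrow> 'a::{real_normed_vector,complete_space}"
  assumes fg: "\<And>n. norm (f n) \<le> g n" and g: "summable g"
  shows "summable f"
proof -
  have "Cauchy (\<lambda>n. sum g {..<n})" using g by (simp add: summable_iff_convergent convergent_Cauchy)
  have le: "norm (sum f {..<n} - sum f {..<m}) \<le> sum g {..<n} - sum g {..<m}" if "m \<le> n" for m n
  proof -
    have "sum f {..<n} - sum f {..<m} = sum f {m..<n}" and "sum g {..<n} - sum g {..<m} = sum g {m..<n}"
      using that by (simp_all add: sum_diff_nat_ivl lessThan_atLeast0)
    then show ?thesis using sum_norm_le[of "{m..<n}" f g] fg by simp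
  qed
  have "Cauchy (\<lambda>n. sum f {..<n})"
  proof (rule CauchyI)
    fix e :: real assume "0 < e"
    then obtain K where K: "\<And>m n. m \<ge> K \<Longrightarrow> n \<ge> K \<Longrightarrow> norm (sum g {..<m} - sum g {..<n}) < e"
      using CauchyD[OF \<open>Cauchy (\<lambda>n. sum g {..<n})\<close>] by blast
    have "norm (sum f {..<m} - sum f {..<n}) < e" if "K \<le> m" "K \<le> n" for m n
    proof (cases "n \<le> m")
      case True
      then show ?thesis using le[OF True] K[OF that] by simp
    next
      case False
      then show ?thesis using le[of m n] K[OF that(2,1)] by (simp add: norm_minus_commute)
    qed
    then show "\<exists>K. \<forall>m\<ge>K. \<forall>n\<ge>K. norm (sum f {..<m} - sum f {..<n}) < e" by blast
  qed
  then show ?thesis by (simp add: summable_iff_convergent Cauchy_convergent_iff)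
qed

text \<open>For a symmetric contraction \<open>B\<close>, \<open>sqrt_series\<close> is \<open>I - sqrt (I - B)\<close>.\<close>

locale sym_contraction =
  fixes B :: "'v::{real_inner,complete_space} \<Rightarrow> 'v"
  assumes bl: "bounded_linear B" and sym: "symmetric_op B" and contr: "\<And>x. norm (B x) \<le> norm x"
begin

lemma bounded_linear_pow: "bounded_linear (B ^^ k)"
  by (rule bounded_linear_funpow[OF bl])

lemma norm_pow_le: "norm ((B ^^ k) x) \<le> norm x"
  by (rule norm_funpow_le[OF contr])

lemma inner_pow: "inner ((B ^^ k) x) y = inner x ((B ^^ k) y)"
  by (rule inner_funpow_adjoint) (use sym in \<open>simp add: symmetric_op_def\<close>)

definition sqrt_series :: "'v \<Rightarrow> 'v" where
  "sqrt_series x = (\<Sum>k. sqrt_coeff k *\<^sub>R (B^^k) x)"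

definition sqrt_partial :: "nat \<Rightarrow> 'v \<Rightarrow> 'v" where
  "sqrt_partial n x = (\<Sum>k\<le>n. sqrt_coeff k *\<^sub>R (B^^k) x)"

lemma norm_sqrt_term_le: "norm (sqrt_coeff k *\<^sub>R (B^^k) x) \<le> sqrt_coeff k * norm x"
  using norm_pow_le sqrt_coeff_nonneg by (auto intro!: mult_left_mono)

lemma summable_sqrt_series: "summable (\<lambda>k. sqrt_coeff k *\<^sub>R (B^^k) x)"
  by (rule summable_comparison_complete[OF norm_sqrt_term_le summable_mult2[OF summable_sqrt_coeff]])

lemma sqrt_partial_tendsto: "(\<lambda>n. sqrt_partial n x) \<longlonglongrightarrow> sqrt_series x"
  unfolding sqrt_partial_def sqrt_series_def by (rule summable_LIMSEQ'[OF summable_sqrt_series])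

lemma norm_sqrt_partial_diff:
  assumes "n \<le> m"
  shows "norm (sqrt_partial m y - sqrt_partial n y) \<le> (sqrt_coeff_sum m - sqrt_coeff_sum n) * norm y"
proof -
  have sub: "{..n} \<subseteq> {..m}" using assms by auto
  have "sqrt_partial m y - sqrt_partial n y = (\<Sum>k\<in>{..m} - {..n}. sqrt_coeff k *\<^sub>R (B^^k) y)"
    unfolding sqrt_partial_def by (rule sum_diff[OF _ sub, symmetric]) simp
  also have "norm \<dots> \<le> (\<Sum>k\<in>{..m} - {..n}. sqrt_coeff k * norm y)"
    by (rule sum_norm_le) (rule norm_sqrt_term_le)
  also have "\<dots> = (sqrt_coeff_sum m - sqrt_coeff_sum n) * norm y"
    unfolding sqrt_coeff_sum_def sum_distrib_right[symmetric] by (simp add: sum_diff[OF _ sub])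
  finally show ?thesis .
qed

lemma norm_sqrt_partial_le: "norm (sqrt_partial n x) \<le> norm x"
proof -
  have "norm (sqrt_partial n x) \<le> (\<Sum>k\<le>n. sqrt_coeff k * norm x)"
    unfolding sqrt_partial_def by (rule sum_norm_le) (rule norm_sqrt_term_le)
  also have "\<dots> = sqrt_coeff_sum n * norm x" by (simp add: sqrt_coeff_sum_def sum_distrib_right)
  also have "\<dots> \<le> norm x"
    by (rule mult_left_le_one_le) (simp_all add: sqrt_coeff_sum_nonneg sqrt_coeff_sum_le_1)
  finally show ?thesis .
qed

lemma norm_sqrt_series_le: "norm (sqrt_series x) \<le> norm x"
  by (rule LIMSEQ_le_const2[OF tendsto_norm[OF sqrt_partial_tendsto]])
    (use norm_sqrt_partial_le in blast)

lemma norm_sqrt_series_tail: "norm (sqrt_series y - sqrt_partial n y) \<le> (1 - sqrt_coeff_sum n) * norm y"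
proof (rule LIMSEQ_le)
  show "(\<lambda>m. norm (sqrt_partial m y - sqrt_partial n y)) \<longlonglongrightarrow> norm (sqrt_series y - sqrt_partial n y)"
    by (intro tendsto_intros sqrt_partial_tendsto)
  show "(\<lambda>m. (sqrt_coeff_sum m - sqrt_coeff_sum n) * norm y) \<longlonglongrightarrow> (1 - sqrt_coeff_sum n) * norm y"
    by (intro tendsto_intros sqrt_coeff_sum_tendsto_1)
qed (use norm_sqrt_partial_diff in blast)

lemma sqrt_series_commute:
  assumes K: "bounded_linear K" and KB: "\<And>x. K (B x) = B (K x)"
  shows "K (sqrt_series x) = sqrt_series (K x)"
proof -
  interpret K: bounded_linear K by (rule K)
  have "K (sqrt_series x) = (\<Sum>k. K (sqrt_coeff k *\<^sub>R (B^^k) x))"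
    unfolding sqrt_series_def by (rule K.suminf[OF summable_sqrt_series])
  also have "\<dots> = sqrt_series (K x)"
    unfolding sqrt_series_def by (simp add: K.scaleR funpow_commute[of K B, OF KB])
  finally show ?thesis .
qed

lemma bounded_linear_sqrt_series: "bounded_linear sqrt_series"
proof (rule bounded_linear_intro[where K=1])
  interpret L: bounded_linear "B^^k" for k by (rule bounded_linear_pow)
  interpret B: bounded_linear B by (rule bl)
  show "sqrt_series (x + y) = sqrt_series x + sqrt_series y" for x y
    unfolding sqrt_series_def
    by (subst suminf_add[OF summable_sqrt_series summable_sqrt_series])
      (simp add: L.add scaleR_right_distrib)
  show "sqrt_series (r *\<^sub>R x) = r *\<^sub>R sqrt_series x" for r x
    using sqrt_series_commute[OF bounded_linear_scaleR_right, of r x] by (simp add: B.scaleR)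
qed (simp add: norm_sqrt_series_le)

lemma sqrt_series_symmetric: "inner (sqrt_series x) y = inner x (sqrt_series y)"
proof -
  have "inner (sqrt_series x) y = (\<Sum>k. inner (sqrt_coeff k *\<^sub>R (B^^k) x) y)"
    unfolding sqrt_series_def
    by (rule bounded_linear.suminf[OF bounded_linear_inner_left summable_sqrt_series])
  also have "\<dots> = (\<Sum>k. inner x (sqrt_coeff k *\<^sub>R (B^^k) y))" by (simp add: inner_pow)
  also have "\<dots> = inner x (sqrt_series y)"
    unfolding sqrt_series_def
    by (rule bounded_linear.suminf[OF bounded_linear_inner_right summable_sqrt_series, symmetric])
  finally show ?thesis .
qed

lemma sqrt_partial_square:
  "sqrt_partial n (sqrt_partial n x)
     = (\<Sum>(i,j)\<in>{..n}\<times>{..n}. (sqrt_coeff i * sqrt_coeff j) *\<^sub>R (B^^(i+j)) x)"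
proof -
  interpret L: bounded_linear "B^^k" for k by (rule bounded_linear_pow)
  have "sqrt_partial n (sqrt_partial n x)
      = (\<Sum>i\<le>n. sqrt_coeff i *\<^sub>R (\<Sum>j\<le>n. sqrt_coeff j *\<^sub>R (B^^i) ((B^^j) x)))"
    unfolding sqrt_partial_def by (simp add: L.sum L.scaleR)
  also have "\<dots> = (\<Sum>i\<le>n. \<Sum>j\<le>n. (sqrt_coeff i * sqrt_coeff j) *\<^sub>R (B^^(i+j)) x)"
    by (simp add: scaleR_sum_right funpow_add)
  finally show ?thesis by (simp add: sum.cartesian_product)
qed

lemma sqrt_partial_triangle:
  "(\<Sum>(i,j)\<in>{(i,j). i+j \<le> n}. (sqrt_coeff i * sqrt_coeff j) *\<^sub>R (B^^(i+j)) x)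
     = 2 *\<^sub>R sqrt_partial n x - (if n \<ge> 1 then B x else 0)"
proof -
  have "(\<Sum>(i,j)\<in>{(i,j). i+j \<le> n}. (sqrt_coeff i * sqrt_coeff j) *\<^sub>R (B^^(i+j)) x)
     = (\<Sum>k\<le>n. \<Sum>i\<le>k. (sqrt_coeff i * sqrt_coeff (k - i)) *\<^sub>R (B^^(i + (k - i))) x)"
    by (rule sum.triangle_reindex_eq)
  also have "\<dots> = (\<Sum>k\<le>n. (\<Sum>i\<le>k. sqrt_coeff i * sqrt_coeff (k - i)) *\<^sub>R (B^^k) x)"
    by (simp add: scaleR_sum_left)
  also have "\<dots> = (\<Sum>k\<le>n. (2 * sqrt_coeff k - (if k = 1 then 1 else 0)) *\<^sub>R (B^^k) x)"
    by (simp only: sqrt_coeff_convolution)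
  also have "\<dots> = 2 *\<^sub>R sqrt_partial n x - (\<Sum>k\<le>n. (if k = 1 then B x else 0))"
    unfolding sqrt_partial_def
    by (simp add: scaleR_diff_left sum_subtractf scaleR_sum_right if_distrib[of "\<lambda>c. c *\<^sub>R _"]
        cong: if_cong)
  also have "(\<Sum>k\<le>n. (if k = 1 then B x else 0)) = (if n \<ge> 1 then B x else 0)"
    by (simp add: sum.delta)
  finally show ?thesis .
qed

text \<open>The partial sums satisfy \<open>s\<^sub>n^2 = 2 s\<^sub>n - B\<close> up to the terms \<open>i + j > n\<close> of the square.\<close>

lemma norm_sqrt_partial_square_error:
  "norm (sqrt_partial n (sqrt_partial n x) - (2 *\<^sub>R sqrt_partial n x - (if n \<ge> 1 then B x else 0)))
     \<le> ((sqrt_coeff_sum n)^2 - (2 * sqrt_coeff_sum n - (if n \<ge> 1 then 1 else 0))) * norm x"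
proof -
  let ?f = "\<lambda>(i,j). (sqrt_coeff i * sqrt_coeff j) *\<^sub>R (B^^(i+j)) x"
  let ?g = "\<lambda>(i,j). sqrt_coeff i * sqrt_coeff j"
  let ?A = "{..n}\<times>{..n}"
  let ?P = "{(i,j). i+j \<le> n}"
  have sub: "?P \<subseteq> ?A" by auto
  have fA: "finite ?A" by simp
  have "sqrt_partial n (sqrt_partial n x) - (2 *\<^sub>R sqrt_partial n x - (if n \<ge> 1 then B x else 0))
      = sum ?f (?A - ?P)"
    by (simp only: sqrt_partial_square sqrt_partial_triangle sum_diff[OF fA sub])
  also have "norm \<dots> \<le> sum (\<lambda>p. ?g p * norm x) (?A - ?P)"
    by (rule sum_norm_le)
      (auto simp: abs_of_nonneg sqrt_coeff_nonneg intro!: mult_left_mono mult_nonneg_nonneg norm_pow_le)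
  also have "\<dots> = (sum ?g ?A - sum ?g ?P) * norm x"
    by (simp add: sum_distrib_right[symmetric] sum_diff[OF fA sub])
  also have "sum ?g ?A - sum ?g ?P
      = (sqrt_coeff_sum n)^2 - (2 * sqrt_coeff_sum n - (if n \<ge> 1 then 1 else 0))"
    by (simp only: sum_sqrt_coeff_square sum_sqrt_coeff_triangle)
  finally show ?thesis .
qed

lemma sqrt_partial_square_tendsto:
  "(\<lambda>n. sqrt_partial n (sqrt_partial n x)) \<longlonglongrightarrow> sqrt_series (sqrt_series x)"
proof -
  interpret S: bounded_linear sqrt_series by (rule bounded_linear_sqrt_series)
  have bound: "norm (sqrt_partial n (sqrt_partial n x) - sqrt_series (sqrt_series x))
      \<le> 2 * ((1 - sqrt_coeff_sum n) * norm x)" for n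
  proof -
    have "sqrt_partial n (sqrt_partial n x) - sqrt_series (sqrt_series x)
        = - (sqrt_series (sqrt_partial n x) - sqrt_partial n (sqrt_partial n x))
          - sqrt_series (sqrt_series x - sqrt_partial n x)"
      by (simp add: S.diff)
    then have "norm (sqrt_partial n (sqrt_partial n x) - sqrt_series (sqrt_series x))
        \<le> norm (sqrt_series (sqrt_partial n x) - sqrt_partial n (sqrt_partial n x))
          + norm (sqrt_series (sqrt_series x - sqrt_partial n x))"
      by (metis norm_triangle_ineq4 norm_minus_cancel)
    also have "norm (sqrt_series (sqrt_partial n x) - sqrt_partial n (sqrt_partial n x))
        \<le> (1 - sqrt_coeff_sum n) * norm x"
      using norm_sqrt_series_tail[of "sqrt_partial n x" n] norm_sqrt_partial_le[of n x]
        sqrt_coeff_sum_le_1[of n] by (meson diff_ge_0_iff_ge mult_left_mono order_trans)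
    also have "norm (sqrt_series (sqrt_series x - sqrt_partial n x)) \<le> (1 - sqrt_coeff_sum n) * norm x"
      using norm_sqrt_series_le norm_sqrt_series_tail order_trans by blast
    finally show ?thesis by (simp add: ac_simps)
  qed
  have "(\<lambda>n. 1 - sqrt_coeff_sum n) \<longlonglongrightarrow> 0"
    using tendsto_diff[OF tendsto_const sqrt_coeff_sum_tendsto_1, of 1] by simp
  then have lim: "(\<lambda>n. 2 * ((1 - sqrt_coeff_sum n) * norm x)) \<longlonglongrightarrow> 0"
    by (simp add: tendsto_mult_left_zero tendsto_mult_right_zero)
  show ?thesis
    by (rule LIM_zero_cancel, rule Lim_null_comparison[OF always_eventually lim]) (use bound in blast)
qed

lemma sqrt_series_square: "sqrt_series (sqrt_series x) = 2 *\<^sub>R sqrt_series x - B x"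
proof (rule LIMSEQ_unique)
  define e where "e n = (sqrt_coeff_sum n)^2 - (2 * sqrt_coeff_sum n - (if n \<ge> 1 then 1 else (0::real)))"
    for n
  have "(\<lambda>n. (sqrt_coeff_sum n)^2 - (2 * sqrt_coeff_sum n - 1)) \<longlonglongrightarrow> 1^2 - (2 * 1 - 1)"
    by (intro tendsto_intros sqrt_coeff_sum_tendsto_1)
  moreover have "\<forall>\<^sub>F n in sequentially. (sqrt_coeff_sum n)^2 - (2 * sqrt_coeff_sum n - 1) = e n"
    unfolding e_def eventually_sequentially by (intro exI[of _ 1]) auto
  ultimately have "e \<longlonglongrightarrow> 0" by (simp add: Lim_transform_eventually)
  then have lim: "(\<lambda>n. e n * norm x) \<longlonglongrightarrow> 0" using tendsto_mult_left_zero by blast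
  have error: "(\<lambda>n. sqrt_partial n (sqrt_partial n x)
      - (2 *\<^sub>R sqrt_partial n x - (if n \<ge> 1 then B x else 0))) \<longlonglongrightarrow> 0"
    by (rule Lim_null_comparison[OF always_eventually lim])
      (use norm_sqrt_partial_square_error e_def in simp)
  have "(\<lambda>n. 2 *\<^sub>R sqrt_partial n x - B x) \<longlonglongrightarrow> 2 *\<^sub>R sqrt_series x - B x"
    by (intro tendsto_intros sqrt_partial_tendsto)
  moreover have "\<forall>\<^sub>F n in sequentially.
      2 *\<^sub>R sqrt_partial n x - B x = 2 *\<^sub>R sqrt_partial n x - (if n \<ge> 1 then B x else 0)"
    unfolding eventually_sequentially by (intro exI[of _ 1]) auto
  ultimately have "(\<lambda>n. 2 *\<^sub>R sqrt_partial n x - (if n \<ge> 1 then B x else 0))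
      \<longlonglongrightarrow> 2 *\<^sub>R sqrt_series x - B x"
    by (rule Lim_transform_eventually)
  from tendsto_add[OF error this]
  show "(\<lambda>n. sqrt_partial n (sqrt_partial n x)) \<longlonglongrightarrow> 2 *\<^sub>R sqrt_series x - B x" by simp
qed (rule sqrt_partial_square_tendsto)

end

lemma (in sym_contraction) sqrt_id_minus:
  defines "R \<equiv> \<lambda>x. x - sqrt_series x"
  shows "bounded_linear R" "symmetric_op R" "pos_op R" "\<And>x. R (R x) = x - B x"
    "\<And>K x. bounded_linear K \<Longrightarrow> (\<And>y. K (B y) = B (K y)) \<Longrightarrow> K (R x) = R (K x)"
proof -
  interpret S: bounded_linear sqrt_series by (rule bounded_linear_sqrt_series)
  show "bounded_linear R"
    unfolding R_def by (intro bounded_linear_sub bounded_linear_ident bounded_linear_sqrt_series)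
  show "symmetric_op R"
    unfolding symmetric_op_def R_def by (simp add: inner_diff_left inner_diff_right sqrt_series_symmetric)
  show "pos_op R" unfolding pos_op_def
  proof
    fix x
    have "inner (sqrt_series x) x \<le> norm (sqrt_series x) * norm x" by (rule norm_cauchy_schwarz)
    also have "\<dots> \<le> norm x * norm x" by (intro mult_right_mono norm_sqrt_series_le) simp
    finally show "0 \<le> inner (R x) x" unfolding R_def
      by (simp add: inner_diff_left power2_norm_eq_inner[symmetric] power2_eq_square)
  qed
  show "R (R x) = x - B x" for x
    unfolding R_def by (simp add: S.diff sqrt_series_square scaleR_2 algebra_simps)
  show "K (R x) = R (K x)" if "bounded_linear K" "\<And>y. K (B y) = B (K y)" for K x
  proof -
    interpret K: bounded_linear K by (rule that(1))
    show ?thesis unfolding R_def using sqrt_series_commute[OF that] by (simp add: K.diff)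
  qed
qed

lemma sym_contraction_id_minus_scaled:
  fixes A :: "'v::{real_inner,complete_space} \<Rightarrow> 'v"
  assumes bl: "bounded_linear A" and sy: "symmetric_op A" and po: "pos_op A" and a: "onorm A < a"
  shows "sym_contraction (\<lambda>x. x - (1/a) *\<^sub>R A x)" (is "sym_contraction ?B")
proof (rule sym_contraction.intro)
  have a0: "0 < a" using onorm_pos_le[OF bl] a by simp
  show Bbl: "bounded_linear ?B"
    by (intro bounded_linear_sub bounded_linear_ident bounded_linear_compose[OF bounded_linear_scaleR_right bl])
  show Bsym: "symmetric_op ?B"
    using sy unfolding symmetric_op_def by (simp add: inner_diff_left inner_diff_right)
  have Bpos: "pos_op ?B" unfolding pos_op_def
  proof
    fix x
    have "inner (A x) x \<le> (onorm A * norm x) * norm x"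
      using norm_cauchy_schwarz[of "A x" x] onorm[OF bl, of x]
      by (meson mult_right_mono norm_ge_zero order_trans)
    also have "\<dots> \<le> a * (norm x * norm x)" using a by (simp add: mult_right_mono mult.assoc)
    finally have "(1/a) * inner (A x) x \<le> norm x * norm x" using a0 by (simp add: field_simps)
    then show "0 \<le> inner (?B x) x"
      by (simp add: inner_diff_left power2_norm_eq_inner[symmetric] power2_eq_square)
  qed
  show "norm (?B x) \<le> norm x" for x
  proof (rule pos_op_le_id_imp_contraction[OF Bbl Bsym Bpos])
    show "inner (?B y) y \<le> inner y y" for y using po a0 by (simp add: inner_diff_left pos_op_def)
  qed
qed

text \<open>With \<open>a > onorm A\<close>, \<open>sqrt a * sqrt (I - B)\<close> for \<open>B = I - A / a\<close> is the square root of \<open>A\<close>.\<close>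

lemma op_sqrt_exists:
  fixes A :: "'v::{real_inner,complete_space} \<Rightarrow> 'v"
  assumes bl: "bounded_linear A" and sy: "symmetric_op A" and po: "pos_op A"
  shows "\<exists>R. bounded_linear R \<and> symmetric_op R \<and> pos_op R \<and> (\<forall>x. R (R x) = A x) \<and>
     (\<forall>K. bounded_linear K \<longrightarrow> (\<forall>x. K (A x) = A (K x)) \<longrightarrow> (\<forall>x. K (R x) = R (K x)))"
proof -
  define a where "a = onorm A + 1"
  have a0: "0 < a" unfolding a_def using onorm_pos_le[OF bl] by simp
  define B where "B x = x - (1/a) *\<^sub>R A x" for x
  interpret B: sym_contraction B
    unfolding B_def[abs_def] by (rule sym_contraction_id_minus_scaled[OF bl sy po]) (simp add: a_def)
  define R where "R x = sqrt a *\<^sub>R (x - B.sqrt_series x)" for x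
  note R0 = B.sqrt_id_minus
  interpret R0: bounded_linear "\<lambda>x. x - B.sqrt_series x" by (rule R0(1))
  have "bounded_linear R"
    unfolding R_def by (rule bounded_linear_compose[OF bounded_linear_scaleR_right R0(1)])
  moreover have "symmetric_op R" using R0(2) unfolding symmetric_op_def R_def by simp
  moreover have "pos_op R" using R0(3) a0 unfolding pos_op_def R_def by simp
  moreover have "R (R x) = A x" for x
    unfolding R_def using a0 by (simp add: R0.scaleR R0(4) B_def)
  moreover have "K (R x) = R (K x)" if K: "bounded_linear K" and KA: "\<forall>x. K (A x) = A (K x)" for K x
  proof -
    interpret K: bounded_linear K by (rule K)
    have "K (B y) = B (K y)" for y unfolding B_def by (simp add: K.diff K.scaleR KA)
    then show ?thesis unfolding R_def using R0(5)[OF K] by (simp add: K.scaleR)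
  qed
  ultimately show ?thesis by blast
qed

text \<open>Uniqueness: if \<open>R\<^sub>1\<close> is another positive square root, it commutes with \<open>R\<close>, and
  \<open>D = R\<^sub>1 - R\<close> satisfies \<open>(R\<^sub>1 + R) D = R\<^sub>1^2 - R^2 = 0\<close>; positivity forces \<open>D^2 = 0\<close>,
  hence \<open>D = 0\<close> by symmetry.\<close>

lemma op_sqrt_unique:
  fixes A :: "'v::{real_inner,complete_space} \<Rightarrow> 'v"
  assumes Rbl: "bounded_linear R" and Rsy: "symmetric_op R" and Rpo: "pos_op R"
    and RR: "\<And>x. R (R x) = A x"
    and Rc: "\<And>K. bounded_linear K \<Longrightarrow> (\<forall>x. K (A x) = A (K x)) \<Longrightarrow> (\<forall>x. K (R x) = R (K x))"
    and R1bl: "bounded_linear R1" and R1sy: "symmetric_op R1" and R1po: "pos_op R1"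
    and R1R1: "\<And>x. R1 (R1 x) = A x"
  shows "R1 = R"
proof -
  interpret R: bounded_linear R by (rule Rbl)
  interpret R1: bounded_linear R1 by (rule R1bl)
  have comm: "R1 (R x) = R (R1 x)" for x using Rc[OF R1bl] by (simp add: R1R1[symmetric])
  define D where "D x = R1 x - R x" for x
  have Dsym: "inner (D x) y = inner x (D y)" for x y
    using Rsy R1sy unfolding symmetric_op_def D_def by (simp add: inner_diff_left inner_diff_right)
  have DD: "D (D x) = 0" for x
  proof -
    let ?y = "D x"
    have "inner (R1 ?y) ?y + inner (R ?y) ?y = inner (R1 ?y + R ?y) ?y" by (simp add: inner_add_left)
    also have "R1 ?y + R ?y = R1 (R1 x) - R1 (R x) + R (R1 x) - R (R x)"
      unfolding D_def by (simp add: R1.diff R.diff)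
    also have "\<dots> = 0" by (simp add: comm RR R1R1)
    finally have s: "inner (R1 ?y) ?y + inner (R ?y) ?y = 0" by simp
    moreover have "0 \<le> inner (R1 ?y) ?y" "0 \<le> inner (R ?y) ?y"
      using R1po Rpo unfolding pos_op_def by blast+
    ultimately have "inner (R1 ?y) ?y = 0" "inner (R ?y) ?y = 0" by linarith+
    then have "R1 ?y = 0" "R ?y = 0"
      using pos_op_form_eq_0_imp[OF R1bl R1sy R1po] pos_op_form_eq_0_imp[OF Rbl Rsy Rpo] by blast+
    then show ?thesis unfolding D_def[of "D x"] by simp
  qed
  have "inner (D x) (D x) = 0" for x by (simp add: Dsym DD)
  then show ?thesis unfolding D_def by (simp add: fun_eq_iff)
qed

lemma op_sqrt:
  fixes A :: "'v::{real_inner,complete_space} \<Rightarrow> 'v"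
  assumes "bounded_linear A" "symmetric_op A" "pos_op A"
  shows bounded_linear_op_sqrt: "bounded_linear (op_sqrt A)"
    and symmetric_op_sqrt: "symmetric_op (op_sqrt A)"
    and op_sqrt_square: "\<And>x. op_sqrt A (op_sqrt A x) = A x"
    and op_sqrt_commute:
      "\<And>K x. bounded_linear K \<Longrightarrow> (\<forall>x. K (A x) = A (K x)) \<Longrightarrow> K (op_sqrt A x) = op_sqrt A (K x)"
proof -
  obtain R where R: "bounded_linear R" "symmetric_op R" "pos_op R" "\<forall>x. R (R x) = A x"
    and Rc: "\<forall>K. bounded_linear K \<longrightarrow> (\<forall>x. K (A x) = A (K x)) \<longrightarrow> (\<forall>x. K (R x) = R (K x))"
    using op_sqrt_exists[OF assms] by blast
  have "op_sqrt A = R"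
    unfolding op_sqrt_def
  proof (rule the_equality)
    show "bounded_linear R \<and> symmetric_op R \<and> (\<forall>x. 0 \<le> inner (R x) x) \<and> (\<forall>x. R (R x) = A x)"
      using R unfolding pos_op_def by blast
  next
    fix R1
    assume "bounded_linear R1 \<and> symmetric_op R1 \<and> (\<forall>x. 0 \<le> inner (R1 x) x) \<and> (\<forall>x. R1 (R1 x) = A x)"
    then show "R1 = R"
      by (intro op_sqrt_unique[OF R(1-3) _ _, of A R1]) (use R Rc in \<open>auto simp: pos_op_def\<close>)
  qed
  then show "bounded_linear (op_sqrt A)" "symmetric_op (op_sqrt A)"
    "\<And>x. op_sqrt A (op_sqrt A x) = A x"
    "\<And>K x. bounded_linear K \<Longrightarrow> (\<forall>x. K (A x) = A (K x)) \<Longrightarrow> K (op_sqrt A x) = op_sqrt A (K x)"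
    using R Rc by auto
qed

section \<open>Pseudo-inverses and rate functions\<close>

lemma pinv_eqI:
  assumes lin: "linear R" and inj: "\<And>y. R y = 0 \<Longrightarrow> y = 0" and w: "R x = w"
  shows "pinv R w = x"
  unfolding pinv_def
proof (rule the_equality)
  show "R x = w \<and> (\<forall>y. R y = 0 \<longrightarrow> inner x y = 0)" using w by (auto dest!: inj)
next
  fix x' assume "R x' = w \<and> (\<forall>y. R y = 0 \<longrightarrow> inner x' y = 0)"
  then have "R (x' - x) = 0" using w linear_diff[OF lin] by simp
  then show "x' = x" using inj by fastforce
qed

lemma rate_eqI:
  assumes "linear R" and "\<And>y. R y = 0 \<Longrightarrow> y = 0" and "R x = w"
  shows "rate R w = ereal ((1/2) * (norm x)^2)"
  using pinv_eqI[OF assms] assms(3) unfolding rate_def by (simp add: range_eqI[of w R x])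

lemma dense_range_if_adjoint_injective:
  fixes Bo Bs :: "'v::{real_inner,complete_space} \<Rightarrow> 'v"
  assumes Bs: "bounded_linear Bs" and adj: "\<And>u z. inner (Bo u) z = inner u (Bs z)"
    and inj: "\<And>z. Bo z = 0 \<Longrightarrow> z = 0"
  shows "closure (range Bs) = UNIV"
proof (rule dense_if_orthogonal_complement_trivial)
  show "subspace (range Bs)"
    by (rule linear_subspace_image[OF bounded_linear.linear[OF Bs] subspace_UNIV])
  fix z assume "\<forall>l\<in>range Bs. inner z l = 0"
  then have "inner (Bo z) (Bo z) = 0" using adj[of z "Bo z"] by (simp add: inner_commute)
  then show "z = 0" using inj by simp
qed

lemma adj_eqI:
  assumes "\<forall>x. inner (A x) y = inner x z"
  shows "adj A y = z"
  unfolding adj_def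
proof (rule the_equality)
  show "\<forall>x. inner (A x) y = inner x z" by (rule assms)
  fix z' assume "\<forall>x. inner (A x) y = inner x z'"
  then have "inner x (z' - z) = 0" for x using assms by (simp add: inner_diff_right)
  then have "inner (z' - z) (z' - z) = 0" by blast
  then show "z' = z" by simp
qed

text \<open>If \<open>R^2 = Bo Bs\<close> with \<open>Bo\<close> the adjoint of \<open>Bs\<close>, then \<open>norm (R a) = norm (Bs a)\<close>, so the
  partial isometry \<open>Bs a \<mapsto> R a\<close> extends from the dense range of \<open>Bs\<close> to the whole space; this
  exhibits each \<open>Bo y\<close> as an image of \<open>R\<close> with a preimage of the same norm as \<open>y\<close>.\<close>

lemma sqrt_of_factorization_range:
  fixes R Bo Bs :: "'v::{real_inner,complete_space} \<Rightarrow> 'v"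
  assumes Rbl: "bounded_linear R" and Rsy: "symmetric_op R"
    and Bobl: "bounded_linear Bo" and Bsbl: "bounded_linear Bs"
    and adj: "\<And>u z. inner (Bo u) z = inner u (Bs z)"
    and RR: "\<And>x. R (R x) = Bo (Bs x)"
    and dense: "closure (range Bs) = UNIV"
  shows "\<exists>x. R x = Bo y \<and> norm x = norm y"
proof -
  interpret R: bounded_linear R by (rule Rbl)
  interpret Bo: bounded_linear Bo by (rule Bobl)
  interpret Bs: bounded_linear Bs by (rule Bsbl)
  have nR: "norm (R a) = norm (Bs a)" for a
  proof -
    have "inner (R a) (R a) = inner (R (R a)) a" using Rsy unfolding symmetric_op_def by simp
    also have "\<dots> = inner (Bs a) (Bs a)" by (simp add: RR adj)
    finally show ?thesis by (simp add: norm_eq_sqrt_inner)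
  qed
  have "y \<in> closure (range Bs)" using dense by simp
  then obtain s where s: "\<And>n. s n \<in> range Bs" and sl: "s \<longlonglongrightarrow> y"
    unfolding closure_sequential by blast
  have "\<forall>n. \<exists>v. Bs v = s n" using s by (simp add: image_iff eq_commute)
  then obtain u where u: "\<And>n. Bs (u n) = s n" by metis
  have uy: "(\<lambda>n. Bs (u n)) \<longlonglongrightarrow> y" using sl u by simp
  have "Cauchy (\<lambda>n. R (u n))"
  proof (rule CauchyI)
    fix e :: real assume "0 < e"
    have eq: "norm (R (u m) - R (u n)) = norm (Bs (u m) - Bs (u n))" for m n
      using nR[of "u m - u n"] by (simp only: R.diff Bs.diff)
    from CauchyD[OF LIMSEQ_imp_Cauchy[OF uy] \<open>0 < e\<close>]
    show "\<exists>M. \<forall>m\<ge>M. \<forall>n\<ge>M. norm (R (u m) - R (u n)) < e" by (simp only: eq)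
  qed
  then obtain x where x: "(\<lambda>n. R (u n)) \<longlonglongrightarrow> x" using Cauchy_convergent_iff convergent_def by blast
  have "(\<lambda>n. R (R (u n))) \<longlonglongrightarrow> R x" using x by (rule R.tendsto)
  moreover have "(\<lambda>n. R (R (u n))) \<longlonglongrightarrow> Bo y" unfolding RR using uy by (rule Bo.tendsto)
  ultimately have "R x = Bo y" by (rule LIMSEQ_unique)
  moreover have "norm x = norm y"
    using tendsto_norm[OF x] tendsto_norm[OF uy] unfolding nR by (rule LIMSEQ_unique)
  ultimately show ?thesis by blast
qed

lemma rate_op_sqrt_factorization:
  fixes Bo Bs :: "'v::{real_inner,complete_space} \<Rightarrow> 'v"
  assumes Bobl: "bounded_linear Bo" and Bsbl: "bounded_linear Bs"
    and adj: "\<And>u z. inner (Bo u) z = inner u (Bs z)"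
    and Bo_inj: "\<And>z. Bo z = 0 \<Longrightarrow> z = 0" and Bs_inj: "\<And>z. Bs z = 0 \<Longrightarrow> z = 0"
  shows "rate (op_sqrt (\<lambda>x. Bo (Bs x))) (Bo y) = ereal ((1/2) * (norm y)^2)"
proof -
  let ?A = "\<lambda>x. Bo (Bs x)"
  have Abl: "bounded_linear ?A" by (rule bounded_linear_compose[OF Bobl Bsbl])
  have "inner (Bo (Bs x)) y = inner x (Bo (Bs y))" for x y
    using adj[of "Bs x" y] adj[of "Bs y" x] by (simp add: inner_commute)
  then have Asy: "symmetric_op ?A" unfolding symmetric_op_def by blast
  have Apo: "pos_op ?A" unfolding pos_op_def by (simp add: adj)
  note R = op_sqrt[OF Abl Asy Apo]
  obtain x where Rx: "op_sqrt ?A x = Bo y" and nx: "norm x = norm y"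
    using sqrt_of_factorization_range[OF R(1,2) Bobl Bsbl adj R(3)
        dense_range_if_adjoint_injective[OF Bsbl adj Bo_inj]] by blast
  have "z = 0" if "op_sqrt ?A z = 0" for z
  proof -
    have "inner (op_sqrt ?A (op_sqrt ?A z)) z = 0" using that linear_0[OF bounded_linear.linear[OF R(1)]] by simp
    then have "inner (Bs z) (Bs z) = 0" by (simp add: R(3) adj)
    then show ?thesis using Bs_inj by simp
  qed
  then show ?thesis using rate_eqI[OF bounded_linear.linear[OF R(1)] _ Rx] nx by simp
qed


section \<open>Skew-adjoint operators: resolvents and Cayley transforms\<close>

locale skew_op =
  fixes M :: "'v::{real_inner,complete_space} \<Rightarrow> 'v" and DM :: "'v set"
  assumes skew: "skew_adjoint M DM"
begin

lemma DM_subspace: "subspace DM"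
  and DM_dense: "closure DM = UNIV"
  and M_add: "x \<in> DM \<Longrightarrow> y \<in> DM \<Longrightarrow> M (x + y) = M x + M y"
  and M_scale: "x \<in> DM \<Longrightarrow> M (c *\<^sub>R x) = c *\<^sub>R M x"
  and M_adjoint_domain: "y \<in> DM \<longleftrightarrow> (\<exists>z. \<forall>x\<in>DM. inner (M x) y = inner x z)"
  and M_skew: "x \<in> DM \<Longrightarrow> y \<in> DM \<Longrightarrow> inner (M x) y = - inner x (M y)"
  using skew unfolding skew_adjoint_def by blast+

lemma DM_0: "0 \<in> DM" using DM_subspace by (rule subspace_0)
lemma DM_add: "x \<in> DM \<Longrightarrow> y \<in> DM \<Longrightarrow> x + y \<in> DM" using DM_subspace by (rule subspace_add)
lemma DM_scale: "x \<in> DM \<Longrightarrow> c *\<^sub>R x \<in> DM" using DM_subspace by (rule subspace_scale)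
lemma DM_diff: "x \<in> DM \<Longrightarrow> y \<in> DM \<Longrightarrow> x - y \<in> DM" using DM_subspace by (rule subspace_diff)
lemma DM_neg: "x \<in> DM \<Longrightarrow> - x \<in> DM" using DM_subspace by (rule subspace_neg)

lemma M_0: "M 0 = 0" using M_scale[OF DM_0, of 0] by simp
lemma M_neg: "x \<in> DM \<Longrightarrow> M (- x) = - M x" using M_scale[of x "-1"] by simp
lemma M_diff: "x \<in> DM \<Longrightarrow> y \<in> DM \<Longrightarrow> M (x - y) = M x - M y"
  using M_add[of x "- y"] M_neg[of y] DM_neg[of y] by simp

lemma inner_M_self: "x \<in> DM \<Longrightarrow> inner (M x) x = 0"
  using M_skew[of x x] by (simp add: inner_commute)

lemma norm_id_minus_M_sq:
  "x \<in> DM \<Longrightarrow> (norm (x - c *\<^sub>R M x))^2 = (norm x)^2 + c^2 * (norm (M x))^2"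
  unfolding power2_norm_eq_inner
  by (simp add: inner_diff_left inner_diff_right inner_M_self inner_commute[of x "M x"]
      power2_eq_square algebra_simps)

lemma norm_id_plus_M_sq:
  "x \<in> DM \<Longrightarrow> (norm (x + c *\<^sub>R M x))^2 = (norm x)^2 + c^2 * (norm (M x))^2"
  using norm_id_minus_M_sq[of x "-c"] by simp

lemma M_closed_graph:
  assumes xn: "\<And>n. x n \<in> DM" and xa: "x \<longlonglongrightarrow> a" and mb: "(\<lambda>n. M (x n)) \<longlonglongrightarrow> b"
  shows "a \<in> DM \<and> M a = b"
proof -
  have e1: "inner (M y) a = inner y (- b)" if y: "y \<in> DM" for y
  proof -
    have "(\<lambda>n. inner (M y) (x n)) \<longlonglongrightarrow> inner (M y) a" by (intro tendsto_intros xa)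
    moreover have "(\<lambda>n. inner (M y) (x n)) = (\<lambda>n. - inner y (M (x n)))" using M_skew[OF y xn] by simp
    moreover have "(\<lambda>n. - inner y (M (x n))) \<longlonglongrightarrow> - inner y b" by (intro tendsto_intros mb)
    ultimately show ?thesis using LIMSEQ_unique by fastforce
  qed
  then have aD: "a \<in> DM" using M_adjoint_domain by blast
  have "inner y (M a - b) = 0" if y: "y \<in> DM" for y
    using e1[OF y] M_skew[OF y aD] by (simp add: inner_diff_right)
  then have "M a - b = 0" by (intro orthogonal_to_dense_imp_0[OF DM_dense]) blast
  then show ?thesis using aD by simp
qed


lemma subspace_range_id_minus_M: "subspace ((\<lambda>y. y - c *\<^sub>R M y) ` DM)"
  unfolding subspace_def
proof (intro conjI ballI allI)
  show "0 \<in> (\<lambda>y. y - c *\<^sub>R M y) ` DM" using DM_0 M_0 by (intro image_eqI[of _ _ 0]) auto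
next
  fix u v assume "u \<in> (\<lambda>y. y - c *\<^sub>R M y) ` DM" "v \<in> (\<lambda>y. y - c *\<^sub>R M y) ` DM"
  then obtain a b where ab: "a \<in> DM" "b \<in> DM" "u = a - c *\<^sub>R M a" "v = b - c *\<^sub>R M b" by blast
  then show "u + v \<in> (\<lambda>y. y - c *\<^sub>R M y) ` DM"
    by (intro image_eqI[of _ _ "a + b"]) (simp_all add: M_add DM_add scaleR_right_distrib)
next
  fix r :: real and u assume "u \<in> (\<lambda>y. y - c *\<^sub>R M y) ` DM"
  then obtain a where a: "a \<in> DM" "u = a - c *\<^sub>R M a" by blast
  then show "r *\<^sub>R u \<in> (\<lambda>y. y - c *\<^sub>R M y) ` DM"
    by (intro image_eqI[of _ _ "r *\<^sub>R a"]) (simp_all add: M_scale DM_scale scaleR_right_diff_distrib)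
qed

lemma norm_le_norm_id_minus_M: "y \<in> DM \<Longrightarrow> norm y \<le> norm (y - c *\<^sub>R M y)"
proof -
  assume "y \<in> DM"
  then have "(norm y)^2 \<le> (norm (y - c *\<^sub>R M y))^2" using norm_id_minus_M_sq[of y c] by simp
  then show ?thesis by (simp add: power2_le_iff_abs_le)
qed

lemma closed_range_id_minus_M:
  assumes c: "c \<noteq> 0"
  shows "closed ((\<lambda>y. y - c *\<^sub>R M y) ` DM)"
  unfolding closed_sequential_limits
proof (intro allI impI, elim conjE)
  fix w l assume wL: "\<forall>n. w n \<in> (\<lambda>y. y - c *\<^sub>R M y) ` DM" and wl: "w \<longlonglongrightarrow> l"
  then have "\<forall>n. \<exists>v. v \<in> DM \<and> w n = v - c *\<^sub>R M v" by blast
  then obtain y where "\<forall>n. y n \<in> DM \<and> w n = y n - c *\<^sub>R M (y n)" by metis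
  then have y: "\<And>n. y n \<in> DM" "\<And>n. w n = y n - c *\<^sub>R M (y n)" by simp_all
  have "Cauchy y"
  proof (rule CauchyI)
    fix e :: real assume "0 < e"
    from CauchyD[OF LIMSEQ_imp_Cauchy[OF wl] this]
    obtain K where K: "\<forall>m\<ge>K. \<forall>n\<ge>K. norm (w m - w n) < e" by blast
    have le: "norm (y m - y n) \<le> norm (w m - w n)" for m n
    proof -
      have "w m - w n = (y m - y n) - c *\<^sub>R M (y m - y n)"
        by (simp add: y(2) M_diff[OF y(1) y(1)] scaleR_diff_right)
      then show ?thesis using norm_le_norm_id_minus_M[OF DM_diff[OF y(1) y(1)], of m n c] by simp
    qed
    show "\<exists>K. \<forall>m\<ge>K. \<forall>n\<ge>K. norm (y m - y n) < e"
    proof (intro exI[of _ K] allI impI)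
      fix m n assume "K \<le> m" "K \<le> n"
      then show "norm (y m - y n) < e" using K le[of m n] by fastforce
    qed
  qed
  then obtain a where ya: "y \<longlonglongrightarrow> a" using Cauchy_convergent_iff convergent_def by blast
  have "(\<lambda>n. (1/c) *\<^sub>R (y n - w n)) \<longlonglongrightarrow> (1/c) *\<^sub>R (a - l)" by (intro tendsto_intros ya wl)
  moreover have "(\<lambda>n. (1/c) *\<^sub>R (y n - w n)) = (\<lambda>n. M (y n))" using y c by (simp add: fun_eq_iff)
  ultimately have "(\<lambda>n. M (y n)) \<longlonglongrightarrow> (1/c) *\<^sub>R (a - l)" by simp
  from M_closed_graph[OF y(1) ya this] have "a \<in> DM" and "M a = (1/c) *\<^sub>R (a - l)" by auto
  then show "l \<in> (\<lambda>y. y - c *\<^sub>R M y) ` DM" using c by (intro image_eqI[of _ _ a]) simp_all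
qed

text \<open>A vector orthogonal to the range of \<open>I - c M\<close> lies in the domain of the adjoint \<open>- M\<close>,
  and testing with itself gives \<open>0 = inner (M z) z = inner z z / c\<close>.\<close>

lemma orthogonal_range_id_minus_M:
  assumes c: "c \<noteq> 0" and o: "\<forall>l\<in>(\<lambda>y. y - c *\<^sub>R M y) ` DM. inner z l = 0"
  shows "z = 0"
proof -
  have o2: "inner (M y) z = inner y ((1/c) *\<^sub>R z)" if y: "y \<in> DM" for y
  proof -
    have "inner z (y - c *\<^sub>R M y) = 0" using o y by blast
    then have "inner z y = c * inner (M y) z" by (simp add: inner_diff_right inner_commute)
    then show ?thesis using c by (simp add: inner_commute)
  qed
  then have zD: "z \<in> DM" using M_adjoint_domain by blast
  have "0 = inner (M z) z" by (rule inner_M_self[OF zD, symmetric])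
  also have "\<dots> = (1/c) * inner z z" by (simp add: o2[OF zD])
  finally show "z = 0" using c by simp
qed

lemma id_minus_M_surj:
  assumes c: "c \<noteq> 0"
  shows "\<exists>y\<in>DM. y - c *\<^sub>R M y = x"
proof -
  have "closure ((\<lambda>y. y - c *\<^sub>R M y) ` DM) = UNIV"
    using dense_if_orthogonal_complement_trivial[OF subspace_range_id_minus_M]
      orthogonal_range_id_minus_M[OF c] by blast
  then have "x \<in> (\<lambda>y. y - c *\<^sub>R M y) ` DM"
    using closure_closed[OF closed_range_id_minus_M[OF c]] by simp
  then show ?thesis by blast
qed

lemma id_minus_M_inj:
  assumes y1: "y1 \<in> DM" "y1 - c *\<^sub>R M y1 = x" and y2: "y2 \<in> DM" "y2 - c *\<^sub>R M y2 = x"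
  shows "y1 = y2"
proof -
  have "(y1 - y2) - c *\<^sub>R M (y1 - y2) = (y1 - c *\<^sub>R M y1) - (y2 - c *\<^sub>R M y2)"
    by (simp add: M_diff[OF y1(1) y2(1)] algebra_simps)
  then have "norm (y1 - y2) \<le> 0"
    using norm_le_norm_id_minus_M[OF DM_diff[OF y1(1) y2(1)], of c] y1(2) y2(2) by simp
  then show ?thesis by simp
qed

definition resolvent :: "real \<Rightarrow> 'v \<Rightarrow> 'v" where "resolvent c = Ttau M DM (2 * c)"

lemma Ttau_eq_resolvent: "Ttau M DM t = resolvent (t / 2)" unfolding resolvent_def by simp

lemma resolvent_solves:
  assumes c: "c \<noteq> 0"
  shows "resolvent c x \<in> DM \<and> resolvent c x - c *\<^sub>R M (resolvent c x) = x"
proof -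
  have ex: "\<exists>!y. y \<in> DM \<and> y - c *\<^sub>R M y = x"
  proof -
    obtain y where y: "y \<in> DM" "y - c *\<^sub>R M y = x" using id_minus_M_surj[OF c, of x] by blast
    show ?thesis
    proof (rule ex1I[of _ y])
      show "y \<in> DM \<and> y - c *\<^sub>R M y = x" using y by simp
      fix y' assume y': "y' \<in> DM \<and> y' - c *\<^sub>R M y' = x"
      show "y' = y" by (rule id_minus_M_inj[OF conjunct1[OF y'] conjunct2[OF y'] y(1) y(2)])
    qed
  qed
  have "resolvent c x = (THE y. y \<in> DM \<and> y - c *\<^sub>R M y = x)" unfolding resolvent_def Ttau_def by simp
  then show ?thesis using theI'[OF ex] by simp
qed

lemma resolvent_in_DM: "c \<noteq> 0 \<Longrightarrow> resolvent c x \<in> DM"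
  and resolvent_eq: "c \<noteq> 0 \<Longrightarrow> resolvent c x - c *\<^sub>R M (resolvent c x) = x"
  using resolvent_solves by blast+

lemma resolvent_eqI: "c \<noteq> 0 \<Longrightarrow> y \<in> DM \<Longrightarrow> y - c *\<^sub>R M y = x \<Longrightarrow> resolvent c x = y"
  by (rule id_minus_M_inj[of "resolvent c x" c x y]) (simp_all add: resolvent_in_DM resolvent_eq)

lemma resolvent_id_minus_M: "c \<noteq> 0 \<Longrightarrow> y \<in> DM \<Longrightarrow> resolvent c (y - c *\<^sub>R M y) = y"
  by (rule resolvent_eqI) simp_all

lemma resolvent_add: "c \<noteq> 0 \<Longrightarrow> resolvent c (x + y) = resolvent c x + resolvent c y"
proof (rule resolvent_eqI)
  assume c: "c \<noteq> 0"
  show "resolvent c x + resolvent c y \<in> DM" by (intro DM_add resolvent_in_DM c)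
  have "resolvent c x + resolvent c y - c *\<^sub>R M (resolvent c x + resolvent c y)
     = (resolvent c x - c *\<^sub>R M (resolvent c x)) + (resolvent c y - c *\<^sub>R M (resolvent c y))"
    by (simp add: M_add[OF resolvent_in_DM[OF c] resolvent_in_DM[OF c]] algebra_simps)
  also have "\<dots> = x + y" by (simp only: resolvent_eq[OF c])
  finally show "resolvent c x + resolvent c y - c *\<^sub>R M (resolvent c x + resolvent c y) = x + y" .
qed

lemma resolvent_scale: "c \<noteq> 0 \<Longrightarrow> resolvent c (r *\<^sub>R x) = r *\<^sub>R resolvent c x"
proof (rule resolvent_eqI)
  assume c: "c \<noteq> 0"
  show "r *\<^sub>R resolvent c x \<in> DM" by (rule DM_scale[OF resolvent_in_DM[OF c]])
  have "r *\<^sub>R resolvent c x - c *\<^sub>R M (r *\<^sub>R resolvent c x)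
      = r *\<^sub>R (resolvent c x - c *\<^sub>R M (resolvent c x))"
    by (simp add: M_scale[OF resolvent_in_DM[OF c]] algebra_simps)
  then show "r *\<^sub>R resolvent c x - c *\<^sub>R M (r *\<^sub>R resolvent c x) = r *\<^sub>R x"
    by (simp add: resolvent_eq[OF c])
qed

lemma norm_resolvent_le: "c \<noteq> 0 \<Longrightarrow> norm (resolvent c x) \<le> norm x"
proof -
  assume c: "c \<noteq> 0"
  have "(norm (resolvent c x))^2 \<le> (norm x)^2"
    using norm_id_minus_M_sq[OF resolvent_in_DM[OF c, of x], of c] resolvent_eq[OF c, of x] by simp
  then show ?thesis by (simp add: power2_le_iff_abs_le)
qed

lemma norm_M_resolvent_le: "c \<noteq> 0 \<Longrightarrow> norm (c *\<^sub>R M (resolvent c x)) \<le> norm x"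
proof -
  assume c: "c \<noteq> 0"
  have "(norm (c *\<^sub>R M (resolvent c x)))^2 \<le> (norm x)^2"
    using norm_id_minus_M_sq[OF resolvent_in_DM[OF c, of x], of c] resolvent_eq[OF c, of x]
    by (simp add: power_mult_distrib)
  then show ?thesis by (simp add: power2_le_iff_abs_le)
qed

lemma bounded_linear_resolvent: "c \<noteq> 0 \<Longrightarrow> bounded_linear (resolvent c)"
  by (rule bounded_linear_intro[where K=1]) (auto simp: resolvent_add resolvent_scale norm_resolvent_le)

lemma M_resolvent:
  "c \<noteq> 0 \<Longrightarrow> y \<in> DM \<Longrightarrow> M (resolvent c y) \<in> DM \<and> M (resolvent c y) = resolvent c (M y)"
proof -
  assume c: "c \<noteq> 0" and y: "y \<in> DM"
  let ?w = "resolvent c y"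
  have wD: "?w \<in> DM" by (rule resolvent_in_DM[OF c])
  have "M ?w = (1/c) *\<^sub>R (?w - (?w - c *\<^sub>R M ?w))" using c by simp
  then have Mw: "M ?w = (1/c) *\<^sub>R (?w - y)" by (simp only: resolvent_eq[OF c])
  have MwD: "M ?w \<in> DM" unfolding Mw by (intro DM_scale DM_diff wD y)
  have "M ?w - c *\<^sub>R M (M ?w) = M (?w - c *\<^sub>R M ?w)"
    by (simp add: M_diff[OF wD DM_scale[OF MwD]] M_scale[OF MwD])
  also have "\<dots> = M y" by (simp add: resolvent_eq[OF c])
  finally have "resolvent c (M y) = M ?w" by (intro resolvent_eqI[OF c MwD])
  then show ?thesis using MwD by simp
qed

lemma resolvent_commute:
  "c \<noteq> 0 \<Longrightarrow> d \<noteq> 0 \<Longrightarrow> resolvent c (resolvent d x) = resolvent d (resolvent c x)"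
proof -
  assume c: "c \<noteq> 0" and d: "d \<noteq> 0"
  let ?v = "resolvent c (resolvent d x)"
  have vD: "?v \<in> DM" by (rule resolvent_in_DM[OF c])
  have Mv: "M ?v \<in> DM" "M ?v = resolvent c (M (resolvent d x))"
    using M_resolvent[OF c resolvent_in_DM[OF d, of x]] by auto
  have e1: "?v - c *\<^sub>R M ?v = resolvent d x" by (rule resolvent_eq[OF c])
  have wD: "?v - d *\<^sub>R M ?v \<in> DM" by (intro DM_diff vD DM_scale Mv)
  have "(?v - d *\<^sub>R M ?v) - c *\<^sub>R M (?v - d *\<^sub>R M ?v)
      = (?v - c *\<^sub>R M ?v) - d *\<^sub>R M (?v - c *\<^sub>R M ?v)"
    by (simp add: M_diff[OF vD DM_scale[OF Mv(1)]] M_scale[OF Mv(1)] algebra_simps)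
  also have "\<dots> = x" unfolding e1 by (rule resolvent_eq[OF d])
  finally have "resolvent c x = ?v - d *\<^sub>R M ?v" by (intro resolvent_eqI[OF c wD])
  then have "resolvent d (resolvent c x) = ?v" by (simp add: resolvent_id_minus_M[OF d vD])
  then show ?thesis by simp
qed

lemma inner_resolvent: "c \<noteq> 0 \<Longrightarrow> inner (resolvent c x) z = inner x (resolvent (-c) z)"
proof -
  assume c: "c \<noteq> 0"
  have c': "-c \<noteq> 0" using c by simp
  define a where "a = resolvent c x"
  define b where "b = resolvent (-c) z"
  have aD: "a \<in> DM" unfolding a_def by (rule resolvent_in_DM[OF c])
  have bD: "b \<in> DM" unfolding b_def by (rule resolvent_in_DM[OF c'])
  have x: "x = a - c *\<^sub>R M a" unfolding a_def using resolvent_eq[OF c, of x] by simp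
  have z: "z = b + c *\<^sub>R M b" unfolding b_def using resolvent_eq[OF c', of z] by simp
  have "inner a z = inner a b + c * inner a (M b)" unfolding z by (simp add: inner_add_right)
  also have "\<dots> = inner (a - c *\<^sub>R M a) b" using M_skew[OF aD bD] by (simp add: inner_diff_left)
  also have "\<dots> = inner x b" unfolding x ..
  finally show ?thesis unfolding a_def b_def .
qed

lemma resolvent_commute_op:
  assumes c: "c \<noteq> 0" and Qbl: "bounded_linear Q" and QM: "commutes_with Q M DM"
  shows "Q (resolvent c x) = resolvent c (Q x)"
proof -
  interpret Q: bounded_linear Q by (rule Qbl)
  have rD: "resolvent c x \<in> DM" by (rule resolvent_in_DM[OF c])
  have QrD: "Q (resolvent c x) \<in> DM" using QM rD unfolding commutes_with_def by blast
  have "Q (resolvent c x) - c *\<^sub>R M (Q (resolvent c x))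
      = Q (resolvent c x - c *\<^sub>R M (resolvent c x))"
    using QM rD unfolding commutes_with_def by (simp add: Q.diff Q.scaleR)
  also have "\<dots> = Q x" by (simp add: resolvent_eq[OF c])
  finally show ?thesis by (intro resolvent_eqI[OF c QrD, symmetric])
qed

text \<open>\<open>2 (I - c M)\<^sup>-\<^sup>1 - I = (I - c M)\<^sup>-\<^sup>1 (I + c M)\<close>: for \<open>c = \<tau>/2\<close> this is the midpoint
  propagator \<open>S\<^sub>\<tau>\<close>.\<close>

definition cayley :: "real \<Rightarrow> 'v \<Rightarrow> 'v" where "cayley c x = 2 *\<^sub>R resolvent c x - x"

lemma bounded_linear_cayley: "c \<noteq> 0 \<Longrightarrow> bounded_linear (cayley c)"
  unfolding cayley_def[abs_def]
  by (intro bounded_linear_sub bounded_linear_ident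
      bounded_linear_compose[OF bounded_linear_scaleR_right bounded_linear_resolvent])

lemma cayley_eq: "c \<noteq> 0 \<Longrightarrow> cayley c x = resolvent c x + c *\<^sub>R M (resolvent c x)"
proof -
  assume c: "c \<noteq> 0"
  have "cayley c x = 2 *\<^sub>R resolvent c x - (resolvent c x - c *\<^sub>R M (resolvent c x))"
    unfolding cayley_def by (simp only: resolvent_eq[OF c])
  then show ?thesis by (simp add: scaleR_2)
qed

lemma cayley_in_DM: "c \<noteq> 0 \<Longrightarrow> x \<in> DM \<Longrightarrow> cayley c x \<in> DM"
  unfolding cayley_def by (intro DM_diff DM_scale resolvent_in_DM)

lemma Stau_eq_cayley:
  assumes t: "t \<noteq> 0" and x: "x \<in> DM"
  shows "Stau M DM t x = cayley (t/2) x"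
proof -
  let ?c = "t/2"
  have c: "?c \<noteq> 0" using t by simp
  have rD: "resolvent ?c x \<in> DM" by (rule resolvent_in_DM[OF c])
  have vD: "2 *\<^sub>R resolvent ?c x - x \<in> DM" by (intro DM_diff DM_scale rD x)
  have "(2 *\<^sub>R resolvent ?c x - x) - ?c *\<^sub>R M (2 *\<^sub>R resolvent ?c x - x)
      = 2 *\<^sub>R (resolvent ?c x - ?c *\<^sub>R M (resolvent ?c x)) - x + ?c *\<^sub>R M x"
    by (simp add: M_diff[OF DM_scale[OF rD] x] M_scale[OF rD] algebra_simps)
  also have "\<dots> = x + ?c *\<^sub>R M x" by (simp only: resolvent_eq[OF c]) (simp add: scaleR_2)
  finally have "resolvent ?c (x + ?c *\<^sub>R M x) = 2 *\<^sub>R resolvent ?c x - x"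
    by (intro resolvent_eqI[OF c vD])
  then show ?thesis unfolding Stau_def cayley_def Ttau_eq_resolvent by simp
qed

lemma Stau_pow_eq_cayley_pow:
  assumes t: "t \<noteq> 0" and x: "x \<in> DM"
  shows "(Stau M DM t ^^ k) x = (cayley (t/2) ^^ k) x \<and> (cayley (t/2) ^^ k) x \<in> DM"
proof (induction k)
  case 0 then show ?case using x by simp
next
  case (Suc k)
  have c: "t/2 \<noteq> 0" using t by simp
  have "(Stau M DM t ^^ Suc k) x = Stau M DM t ((cayley (t/2) ^^ k) x)" using Suc by simp
  also have "\<dots> = cayley (t/2) ((cayley (t/2) ^^ k) x)" using Suc by (intro Stau_eq_cayley t) simp
  finally show ?case using cayley_in_DM[OF c] Suc by simp
qed

lemma norm_cayley: "c \<noteq> 0 \<Longrightarrow> norm (cayley c x) = norm x"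
proof -
  assume c: "c \<noteq> 0"
  have rD: "resolvent c x \<in> DM" by (rule resolvent_in_DM[OF c])
  have "(norm (cayley c x))^2 = (norm (resolvent c x))^2 + c^2 * (norm (M (resolvent c x)))^2"
    unfolding cayley_eq[OF c] by (rule norm_id_plus_M_sq[OF rD])
  also have "\<dots> = (norm (resolvent c x - c *\<^sub>R M (resolvent c x)))^2"
    by (rule norm_id_minus_M_sq[OF rD, symmetric])
  also have "\<dots> = (norm x)^2" by (simp only: resolvent_eq[OF c])
  finally show ?thesis by simp
qed

lemma cayley_inverse: "c \<noteq> 0 \<Longrightarrow> cayley (-c) (cayley c x) = x"
proof -
  assume c: "c \<noteq> 0"
  have c': "-c \<noteq> 0" using c by simp
  have rD: "resolvent c x \<in> DM" by (rule resolvent_in_DM[OF c])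
  have "resolvent (-c) (cayley c x) = resolvent c x"
    unfolding cayley_eq[OF c] using resolvent_id_minus_M[OF c' rD] by simp
  then have "cayley (-c) (cayley c x) = 2 *\<^sub>R resolvent c x - (resolvent c x + c *\<^sub>R M (resolvent c x))"
    unfolding cayley_def[of "-c"] by (simp add: cayley_eq[OF c])
  also have "\<dots> = resolvent c x - c *\<^sub>R M (resolvent c x)" by (simp add: scaleR_2)
  also have "\<dots> = x" by (rule resolvent_eq[OF c])
  finally show ?thesis .
qed

lemma M_cayley: "c \<noteq> 0 \<Longrightarrow> x \<in> DM \<Longrightarrow> M (cayley c x) = cayley c (M x)"
proof -
  assume c: "c \<noteq> 0" and x: "x \<in> DM"
  have rD: "resolvent c x \<in> DM" by (rule resolvent_in_DM[OF c])
  have "M (cayley c x) = 2 *\<^sub>R M (resolvent c x) - M x"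
    unfolding cayley_def by (simp add: M_diff[OF DM_scale[OF rD] x] M_scale[OF rD])
  also have "\<dots> = 2 *\<^sub>R resolvent c (M x) - M x" using M_resolvent[OF c x] by simp
  finally show ?thesis unfolding cayley_def .
qed

lemma resolvent_cayley_commute:
  "c \<noteq> 0 \<Longrightarrow> d \<noteq> 0 \<Longrightarrow> resolvent d (cayley c x) = cayley c (resolvent d x)"
proof -
  assume c: "c \<noteq> 0" and d: "d \<noteq> 0"
  interpret R: bounded_linear "resolvent d" by (rule bounded_linear_resolvent[OF d])
  show ?thesis unfolding cayley_def by (simp add: R.diff R.scaleR resolvent_commute[OF c d])
qed

lemma inner_cayley: "c \<noteq> 0 \<Longrightarrow> inner (cayley c x) z = inner x (cayley (-c) z)"
proof -
  assume c: "c \<noteq> 0"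
  show ?thesis unfolding cayley_def by (simp add: inner_diff_left inner_diff_right inner_resolvent[OF c])
qed

lemma cayley_commute_op:
  assumes c: "c \<noteq> 0" and Qbl: "bounded_linear Q" and QM: "commutes_with Q M DM"
  shows "Q (cayley c x) = cayley c (Q x)"
proof -
  interpret Q: bounded_linear Q by (rule Qbl)
  show ?thesis unfolding cayley_def by (simp add: Q.diff Q.scaleR resolvent_commute_op[OF c Qbl QM])
qed

lemma cayley_pow_DM:
  "c \<noteq> 0 \<Longrightarrow> x \<in> DM \<Longrightarrow> (cayley c ^^ k) x \<in> DM \<and> M ((cayley c ^^ k) x) = (cayley c ^^ k) (M x)"
proof (induction k)
  case 0 then show ?case by simp
next
  case (Suc k)
  then show ?case by (simp add: cayley_in_DM M_cayley)
qed

lemma norm_cayley_pow: "c \<noteq> 0 \<Longrightarrow> norm ((cayley c ^^ k) x) = norm x"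
  by (rule norm_funpow_eq) (rule norm_cayley)

lemma bounded_linear_cayley_pow: "c \<noteq> 0 \<Longrightarrow> bounded_linear (cayley c ^^ k)"
  by (rule bounded_linear_funpow[OF bounded_linear_cayley])

lemma resolvent_smoothing:
  assumes e: "0 < e" and y: "y \<in> DM"
  shows "resolvent e y \<in> DM" and "M (resolvent e y) \<in> DM"
    and "e * norm (M (M (resolvent e y))) \<le> norm (M y)"
    and "norm (y - resolvent e y) \<le> e * norm (M y)"
proof -
  have en: "e \<noteq> 0" using e by simp
  have My': "M (resolvent e y) \<in> DM" "M (resolvent e y) = resolvent e (M y)"
    using M_resolvent[OF en y] by auto
  show "resolvent e y \<in> DM" "M (resolvent e y) \<in> DM" using resolvent_in_DM[OF en] My' by simp_all
  show "e * norm (M (M (resolvent e y))) \<le> norm (M y)"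
    using norm_M_resolvent_le[OF en, of "M y"] e unfolding My'(2) by simp
  have "y - resolvent e y = - (e *\<^sub>R resolvent e (M y))"
    using resolvent_eq[OF en, of y] My'(2) by (simp add: algebra_simps)
  then show "norm (y - resolvent e y) \<le> e * norm (M y)"
    using norm_resolvent_le[OF en, of "M y"] e by (simp add: mult_left_mono)
qed

end


section \<open>The unitary group and the Crank--Nicolson error\<close>

lemma has_vector_derivative_at_if_difference_quotient:
  fixes f :: "real \<Rightarrow> 'a::real_normed_vector"
  assumes "((\<lambda>h. (1 / h) *\<^sub>R (f (t + h) - f t)) \<longlongrightarrow> v) (at 0)"
  shows "(f has_vector_derivative v) (at t)"
  unfolding has_vector_derivative_def has_derivative_at
proof
  show "bounded_linear (\<lambda>h. h *\<^sub>R v)" by (rule bounded_linear_scaleR_left)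
  have "((\<lambda>h. norm ((1 / h) *\<^sub>R (f (t + h) - f t) - v)) \<longlongrightarrow> 0) (at 0)"
    using tendsto_norm_zero[OF LIM_zero[OF assms]] .
  moreover have "\<forall>\<^sub>F h in at 0. norm ((1 / h) *\<^sub>R (f (t + h) - f t) - v)
        = norm (f (t + h) - f t - h *\<^sub>R v) / norm h"
  proof -
    have "norm ((1 / h) *\<^sub>R (f (t + h) - f t) - v) = norm (f (t + h) - f t - h *\<^sub>R v) / norm h"
      if h: "h \<noteq> 0" for h :: real
    proof -
      have "(1 / h) *\<^sub>R (f (t + h) - f t) - v = (1 / h) *\<^sub>R (f (t + h) - f t - h *\<^sub>R v)"
        using h by (simp add: scaleR_diff_right)
      then show ?thesis by (simp add: divide_inverse mult.commute)
    qed
    then show ?thesis by (simp add: eventually_at_filter)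
  qed
  ultimately show "((\<lambda>h. norm (f (t + h) - f t - h *\<^sub>R v) / norm h) \<longlongrightarrow> 0) (at 0)"
    by (rule Lim_transform_eventually)
qed

locale skew_group = skew_op M DM for M :: "'v::{real_inner,complete_space} \<Rightarrow> 'v" and DM +
  fixes S :: "real \<Rightarrow> 'v \<Rightarrow> 'v"
  assumes group: "unitary_group_generated_by S M DM"
begin

lemma bounded_linear_S: "bounded_linear (S t)"
  and S_0: "S 0 x = x"
  and norm_S: "norm (S t x) = norm x"
  and continuous_S: "continuous_on UNIV (\<lambda>t. S t x)"
  and S_generator: "x \<in> DM \<Longrightarrow> ((\<lambda>h. (1 / h) *\<^sub>R (S h x - x)) \<longlongrightarrow> M x) (at_right 0)"
  and DM_iff_generator_converges:
    "x \<in> DM \<longleftrightarrow> (\<exists>y. ((\<lambda>h. (1 / h) *\<^sub>R (S h x - x)) \<longlongrightarrow> y) (at_right 0))"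
  using group unfolding unitary_group_generated_by_def by auto

lemma S_add: "S (s + t) x = S s (S t x)"
  using group unfolding unitary_group_generated_by_def by simp

lemma S_commute: "S s (S t x) = S t (S s x)"
proof -
  have "S s (S t x) = S (s + t) x" by (rule S_add[symmetric])
  also have "s + t = t + s" by simp
  also have "S (t + s) x = S t (S s x)" by (rule S_add)
  finally show ?thesis .
qed

lemma S_inv: "S t (S (-t) x) = x"
  using S_add[of t "-t" x] S_0 by simp

lemma inner_S_S: "inner (S t x) (S t y) = inner x y"
proof -
  interpret L: bounded_linear "S t" by (rule bounded_linear_S)
  have "(norm (S t (x + y)))^2 = (norm (x + y))^2" by (simp add: norm_S)
  then have "inner (S t x + S t y) (S t x + S t y) = inner (x + y) (x + y)"
    by (simp add: L.add power2_norm_eq_inner)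
  moreover have "inner (S t z) (S t z) = inner z z" for z
    using norm_S[of t z] by (simp add: power2_norm_eq_inner[symmetric])
  moreover have "inner (a + b) (a + b) = inner a a + 2 * inner a b + inner b b" for a b :: 'v
    by (simp add: inner_add_left inner_add_right inner_commute)
  ultimately show ?thesis by (metis add_right_cancel add_left_cancel mult_left_cancel zero_neq_numeral)
qed

lemma inner_S: "inner (S t x) y = inner x (S (-t) y)"
proof -
  have "inner (S t x) y = inner (S t x) (S t (S (-t) y))" by (simp add: S_inv)
  also have "\<dots> = inner x (S (-t) y)" by (rule inner_S_S)
  finally show ?thesis .
qed

lemma adj_S: "adj (S t) y = S (-t) y"
  by (rule adj_eqI) (simp add: inner_S)

lemma S_DM:
  assumes x: "x \<in> DM"
  shows "S t x \<in> DM \<and> M (S t x) = S t (M x)"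
proof -
  interpret L: bounded_linear "S t" by (rule bounded_linear_S)
  have "((\<lambda>h. S t ((1 / h) *\<^sub>R (S h x - x))) \<longlongrightarrow> S t (M x)) (at_right 0)"
    by (rule L.tendsto[OF S_generator[OF x]])
  moreover have "(\<lambda>h. S t ((1 / h) *\<^sub>R (S h x - x))) = (\<lambda>h. (1 / h) *\<^sub>R (S h (S t x) - S t x))"
    by (simp add: fun_eq_iff L.scaleR L.diff S_commute)
  ultimately have lim: "((\<lambda>h. (1 / h) *\<^sub>R (S h (S t x) - S t x)) \<longlongrightarrow> S t (M x)) (at_right 0)"
    by simp
  then have D: "S t x \<in> DM" using DM_iff_generator_converges by blast
  have "((\<lambda>h. (1 / h) *\<^sub>R (S h (S t x) - S t x)) \<longlongrightarrow> M (S t x)) (at_right 0)"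
    by (rule S_generator[OF D])
  then have "M (S t x) = S t (M x)" using lim tendsto_unique trivial_limit_at_right_real by blast
  then show ?thesis using D by simp
qed

lemma S_shifted_quotient:
  assumes x: "x \<in> DM"
  shows "((\<lambda>k. S (t - k) ((1 / k) *\<^sub>R (S k x - x))) \<longlongrightarrow> S t (M x)) (at_right 0)"
proof -
  define q where "q k = (1 / k) *\<^sub>R (S k x - x)" for k
  have "((\<lambda>k. norm (q k - M x)) \<longlongrightarrow> 0) (at_right 0)"
    unfolding q_def by (rule tendsto_norm_zero[OF LIM_zero[OF S_generator[OF x]]])
  then have "((\<lambda>k. norm (S (t - k) (q k - M x))) \<longlongrightarrow> 0) (at_right 0)" by (simp only: norm_S)
  then have "((\<lambda>k. S (t - k) (q k - M x)) \<longlongrightarrow> 0) (at_right 0)" by (rule tendsto_norm_zero_cancel)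
  moreover have "((\<lambda>k. S (t - k) (M x)) \<longlongrightarrow> S t (M x)) (at_right 0)"
  proof -
    have "isCont (\<lambda>s. S s (M x)) t"
      using continuous_S[of "M x"] by (simp add: continuous_on_eq_continuous_at)
    moreover have "((\<lambda>k. t - k) \<longlongrightarrow> t - 0) (at_right 0)" by (intro tendsto_intros)
    ultimately show ?thesis using isCont_tendsto_compose by fastforce
  qed
  ultimately have "((\<lambda>k. S (t - k) (q k - M x) + S (t - k) (M x)) \<longlongrightarrow> 0 + S t (M x)) (at_right 0)"
    by (rule tendsto_add)
  then show ?thesis
    unfolding q_def by (simp add: linear_diff[OF bounded_linear.linear[OF bounded_linear_S]])
qed

lemma S_difference_quotient:
  assumes x: "x \<in> DM"
  shows "((\<lambda>h. (1 / h) *\<^sub>R (S (t + h) x - S t x)) \<longlongrightarrow> S t (M x)) (at 0)"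
proof (rule filterlim_split_at)
  interpret L: bounded_linear "S t" by (rule bounded_linear_S)
  have "(\<lambda>h. (1 / h) *\<^sub>R (S (t + h) x - S t x)) = (\<lambda>h. S t ((1 / h) *\<^sub>R (S h x - x)))"
    by (simp add: fun_eq_iff L.scaleR L.diff S_add)
  then show "((\<lambda>h. (1 / h) *\<^sub>R (S (t + h) x - S t x)) \<longlongrightarrow> S t (M x)) (at_right 0)"
    using L.tendsto[OF S_generator[OF x]] by simp
  have shift: "(\<lambda>k. (1 / (- k)) *\<^sub>R (S (t + - k) x - S t x)) = (\<lambda>k. S (t - k) ((1 / k) *\<^sub>R (S k x - x)))"
  proof
    fix k
    interpret L': bounded_linear "S (t - k)" by (rule bounded_linear_S)
    have "S t x = S (t - k) (S k x)" using S_add[of "t - k" k x] by simp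
    then show "(1 / (- k)) *\<^sub>R (S (t + - k) x - S t x) = S (t - k) ((1 / k) *\<^sub>R (S k x - x))"
      by (simp add: L'.scaleR L'.diff algebra_simps)
  qed
  show "((\<lambda>h. (1 / h) *\<^sub>R (S (t + h) x - S t x)) \<longlongrightarrow> S t (M x)) (at_left 0)"
    by (subst filterlim_at_left_to_right, simp only: minus_zero shift) (rule S_shifted_quotient[OF x])
qed

lemma S_has_vector_derivative:
  assumes x: "x \<in> DM"
  shows "((\<lambda>s. S s x) has_vector_derivative S t (M x)) (at t)"
  by (rule has_vector_derivative_at_if_difference_quotient[OF S_difference_quotient[OF x]])

lemma norm_S_linearization_le:
  assumes x: "x \<in> DM" and h: "0 \<le> h"
    and B: "\<And>s. s \<in> {0..h} \<Longrightarrow> norm (S s (M x) - M x) \<le> B"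
  shows "norm (S h x - x - h *\<^sub>R M x) \<le> h * B"
proof -
  have d: "\<And>s. s \<in> {0..h} \<Longrightarrow> ((\<lambda>s. S s x) has_vector_derivative S s (M x)) (at s within {0..h})"
    by (rule has_vector_derivative_at_within[OF S_has_vector_derivative[OF x]])
  have seg: "closed_segment 0 h \<subseteq> {0..h}" using h by (simp add: closed_segment_eq_real_ivl)
  have B': "\<And>s. s \<in> {0..h} \<Longrightarrow> norm (S s (M x) - S 0 (M x)) \<le> B" using B by (simp add: S_0)
  have "norm (S h x - S 0 x - (h - 0) *\<^sub>R S 0 (M x)) \<le> norm (h - 0) * B"
    by (rule vector_differentiable_bound_linearization[OF d seg B']) (use h in auto)
  then show ?thesis using h by (simp add: S_0)
qed

lemma norm_S_minus_id_le:
  assumes x: "x \<in> DM" and h: "0 \<le> h"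
  shows "norm (S h x - x) \<le> 3 * h * norm (M x)"
proof -
  have "norm (S h x - x - h *\<^sub>R M x) \<le> h * (2 * norm (M x))"
  proof (rule norm_S_linearization_le[OF x h])
    fix s
    have "norm (S s (M x) - M x) \<le> norm (S s (M x)) + norm (M x)" by (rule norm_triangle_ineq4)
    then show "norm (S s (M x) - M x) \<le> 2 * norm (M x)" by (simp add: norm_S)
  qed
  moreover have "norm (S h x - x) \<le> norm (S h x - x - h *\<^sub>R M x) + norm (h *\<^sub>R M x)"
  proof -
    have "S h x - x = (S h x - x - h *\<^sub>R M x) + h *\<^sub>R M x" by simp
    then show ?thesis by (metis norm_triangle_ineq)
  qed
  ultimately show ?thesis using h by simp
qed

lemma norm_S_second_order_le:
  assumes x: "x \<in> DM" and Mx: "M x \<in> DM" and h: "0 \<le> h"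
  shows "norm (S h x - x - h *\<^sub>R M x) \<le> 3 * h^2 * norm (M (M x))"
proof -
  have "norm (S h x - x - h *\<^sub>R M x) \<le> h * (3 * h * norm (M (M x)))"
  proof (rule norm_S_linearization_le[OF x h])
    fix s assume s: "s \<in> {0..h}"
    have "norm (S s (M x) - M x) \<le> 3 * s * norm (M (M x))" using s by (intro norm_S_minus_id_le[OF Mx]) simp
    also have "\<dots> \<le> 3 * h * norm (M (M x))" using s by (intro mult_right_mono) auto
    finally show "norm (S s (M x) - M x) \<le> 3 * h * norm (M (M x))" .
  qed
  then show ?thesis by (simp add: power2_eq_square mult.assoc mult.left_commute)
qed

lemma norm_cayley_second_order_le:
  assumes c: "c \<noteq> 0" and z: "z \<in> DM" and Mz: "M z \<in> DM"
  shows "norm (cayley c z - z - (2 * c) *\<^sub>R M z) \<le> 2 * c^2 * norm (M (M z))"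
proof -
  interpret R: bounded_linear "resolvent c" by (rule bounded_linear_resolvent[OF c])
  have wD: "z + c *\<^sub>R M z \<in> DM" by (intro DM_add z DM_scale Mz)
  have Mw: "M (z + c *\<^sub>R M z) = M z + c *\<^sub>R M (M z)" by (simp add: M_add[OF z DM_scale[OF Mz]] M_scale[OF Mz])
  have "(z + c *\<^sub>R M z) - c *\<^sub>R M (z + c *\<^sub>R M z) = z - c^2 *\<^sub>R M (M z)"
    unfolding Mw by (simp add: algebra_simps power2_eq_square)
  then have "resolvent c (z - c^2 *\<^sub>R M (M z)) = z + c *\<^sub>R M z" by (intro resolvent_eqI[OF c wD])
  then have e: "resolvent c z - z - c *\<^sub>R M z = c^2 *\<^sub>R resolvent c (M (M z))"
    by (simp add: R.diff R.scaleR algebra_simps)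
  have "cayley c z - z - (2 * c) *\<^sub>R M z = 2 *\<^sub>R (resolvent c z - z - c *\<^sub>R M z)"
    unfolding cayley_def by (simp add: algebra_simps scaleR_2)
  also have "\<dots> = (2 * c^2) *\<^sub>R resolvent c (M (M z))" by (simp add: e)
  finally have "norm (cayley c z - z - (2 * c) *\<^sub>R M z) = 2 * c^2 * norm (resolvent c (M (M z)))" by simp
  also have "\<dots> \<le> 2 * c^2 * norm (M (M z))" by (intro mult_left_mono norm_resolvent_le[OF c]) simp
  finally show ?thesis .
qed

lemma cayley_local_error:
  assumes t: "0 < t" and z: "z \<in> DM" and Mz: "M z \<in> DM"
  shows "norm (S t z - cayley (t/2) z) \<le> 4 * t^2 * norm (M (M z))"
proof -
  have c: "t/2 \<noteq> 0" using t by simp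
  have e: "S t z - cayley (t/2) z = (S t z - z - t *\<^sub>R M z) - (cayley (t/2) z - z - (2 * (t/2)) *\<^sub>R M z)" by simp
  have "norm (S t z - cayley (t/2) z) \<le> norm (S t z - z - t *\<^sub>R M z) + norm (cayley (t/2) z - z - (2 * (t/2)) *\<^sub>R M z)"
    unfolding e by (rule norm_triangle_ineq4)
  also have "\<dots> \<le> 3 * t^2 * norm (M (M z)) + 2 * (t/2)^2 * norm (M (M z))"
  proof -
    have a: "norm (S t z - z - t *\<^sub>R M z) \<le> 3 * t^2 * norm (M (M z))"
      by (rule norm_S_second_order_le[OF z Mz]) (use t in simp)
    have b: "norm (cayley (t/2) z - z - (2 * (t/2)) *\<^sub>R M z) \<le> 2 * (t/2)^2 * norm (M (M z))"
      by (rule norm_cayley_second_order_le[OF c z Mz])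
    show ?thesis using a b by linarith
  qed
  also have "\<dots> = (7/2) * (t^2 * norm (M (M z)))" by (simp add: power2_eq_square algebra_simps)
  also have "\<dots> \<le> 4 * (t^2 * norm (M (M z)))" by (rule mult_right_mono) simp_all
  finally show ?thesis by (simp add: mult.assoc)
qed

lemma S_DM2:
  assumes y: "y \<in> DM" and My: "M y \<in> DM"
  shows "S t y \<in> DM \<and> M (S t y) \<in> DM \<and> norm (M (M (S t y))) = norm (M (M y))"
proof -
  have a: "S t y \<in> DM" "M (S t y) = S t (M y)" using S_DM[OF y] by auto
  have b: "S t (M y) \<in> DM" "M (S t (M y)) = S t (M (M y))" using S_DM[OF My] by auto
  show ?thesis using a b by (simp add: norm_S)
qed

lemma crank_nicolson_error_DM2:
  assumes y: "y \<in> DM" and My: "M y \<in> DM" and t: "0 < t"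
  shows "norm (S (real N * t) y - (cayley (t/2) ^^ N) y) \<le> real N * (4 * t^2 * norm (M (M y)))"
proof (induction N)
  case 0 then show ?case by (simp add: S_0)
next
  case (Suc N)
  have c: "t/2 \<noteq> 0" using t by simp
  interpret C: bounded_linear "cayley (t/2)" by (rule bounded_linear_cayley[OF c])
  define z where "z = S (real N * t) y"
  have zz: "z \<in> DM" "M z \<in> DM" "norm (M (M z)) = norm (M (M y))" unfolding z_def using S_DM2[OF y My] by auto
  have "S (real (Suc N) * t) y = S t z" unfolding z_def by (simp add: S_add[symmetric] algebra_simps)
  moreover have "(cayley (t/2) ^^ Suc N) y = cayley (t/2) ((cayley (t/2) ^^ N) y)" by simp
  ultimately have e: "S (real (Suc N) * t) y - (cayley (t/2) ^^ Suc N) y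
      = (S t z - cayley (t/2) z) + cayley (t/2) (z - (cayley (t/2) ^^ N) y)"
    by (simp add: C.diff)
  have "norm (S (real (Suc N) * t) y - (cayley (t/2) ^^ Suc N) y)
      \<le> norm (S t z - cayley (t/2) z) + norm (cayley (t/2) (z - (cayley (t/2) ^^ N) y))"
    unfolding e by (rule norm_triangle_ineq)
  also have "norm (cayley (t/2) (z - (cayley (t/2) ^^ N) y)) = norm (z - (cayley (t/2) ^^ N) y)"
    by (rule norm_cayley[OF c])
  also have "\<dots> \<le> real N * (4 * t^2 * norm (M (M y)))" using Suc unfolding z_def .
  also have "norm (S t z - cayley (t/2) z) \<le> 4 * t^2 * norm (M (M y))"
    using cayley_local_error[OF t zz(1) zz(2)] zz(3) by simp
  finally show ?case by (simp add: algebra_simps)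
qed

text \<open>Splitting \<open>y\<close> into its resolvent smoothing \<open>y'\<close> at scale \<open>\<surd>t\<close> and the remainder, the
  second-order estimate applies to \<open>y'\<close>, while the remainder is small and propagated
  by two unitary maps.\<close>

lemma crank_nicolson_error_DM:
  assumes y: "y \<in> DM" and t: "0 < t"
  shows "norm (S (real N * t) y - (cayley (t/2) ^^ N) y)
    \<le> (2 + 4 * (real N * t)) * sqrt t * norm (M y)"
proof -
  define e where "e = sqrt t"
  have e0: "0 < e" and ee: "e * e = t" unfolding e_def using t by simp_all
  have c: "t/2 \<noteq> 0" using t by simp
  interpret C: bounded_linear "cayley (t/2) ^^ N" by (rule bounded_linear_cayley_pow[OF c])
  interpret SN: bounded_linear "S (real N * t)" by (rule bounded_linear_S)
  define y' where "y' = resolvent e y"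
  note smooth = resolvent_smoothing[OF e0 y, folded y'_def]
  define E where "E u = S (real N * t) u - (cayley (t/2) ^^ N) u" for u
  have "norm (E (y - y')) \<le> norm (S (real N * t) (y - y')) + norm ((cayley (t/2) ^^ N) (y - y'))"
    unfolding E_def by (rule norm_triangle_ineq4)
  also have "\<dots> = 2 * norm (y - y')" by (simp add: norm_S norm_cayley_pow[OF c])
  finally have E1: "norm (E (y - y')) \<le> 2 * (e * norm (M y))" using smooth(4) by simp
  have "norm (E y') \<le> real N * (4 * t^2 * norm (M (M y')))"
    unfolding E_def by (rule crank_nicolson_error_DM2[OF smooth(1,2) t])
  also have "\<dots> \<le> real N * (4 * t^2 * (norm (M y) / e))"
    using smooth(3) e0 by (intro mult_left_mono) (auto simp: field_simps)
  also have "\<dots> = 4 * (real N * t) * e * norm (M y)"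
    using ee e0 by (simp add: power2_eq_square field_simps)
  finally have E2: "norm (E y') \<le> 4 * (real N * t) * e * norm (M y)" .
  have "E y = E y' + E (y - y')" unfolding E_def by (simp add: C.diff SN.diff)
  then have "norm (E y) \<le> norm (E y') + norm (E (y - y'))" by (simp add: norm_triangle_ineq)
  also have "\<dots> \<le> (2 + 4 * (real N * t)) * e * norm (M y)" using E1 E2 by (simp add: algebra_simps)
  finally show ?thesis unfolding E_def e_def .
qed

end


section \<open>Noise covariances commuting with the Maxwell operator\<close>

locale commuting_noise = skew_group M DM S for M :: "'v::{real_inner,complete_space} \<Rightarrow> 'v" and DM S +
  fixes Q :: "'v \<Rightarrow> 'v"
  assumes Q_bl: "bounded_linear Q" and Q_sym: "symmetric_op Q" and Q_pd: "pos_def_op Q"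
    and Q_comm: "commutes_with Q M DM"
begin

sublocale Q: bounded_linear Q by (rule Q_bl)

lemma Q_DM: "y \<in> DM \<Longrightarrow> Q y \<in> DM"
  using Q_comm unfolding commutes_with_def by blast

lemma Q_inj: "Q x = 0 \<Longrightarrow> x = 0"
  using Q_pd unfolding pos_def_op_def by force

lemma pos_op_Q: "pos_op Q"
  unfolding pos_op_def
proof
  fix x
  show "0 \<le> inner (Q x) x"
    using Q_pd unfolding pos_def_op_def by (cases "x = 0") (simp_all add: less_imp_le)
qed

abbreviation sqrtQ :: "'v \<Rightarrow> 'v" where "sqrtQ \<equiv> op_sqrt Q"

lemmas bounded_linear_sqrtQ = bounded_linear_op_sqrt[OF Q_bl Q_sym pos_op_Q]
  and symmetric_sqrtQ = symmetric_op_sqrt[OF Q_bl Q_sym pos_op_Q]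
  and sqrtQ_square = op_sqrt_square[OF Q_bl Q_sym pos_op_Q]
  and sqrtQ_commute = op_sqrt_commute[OF Q_bl Q_sym pos_op_Q]

sublocale sqrtQ: bounded_linear sqrtQ by (rule bounded_linear_sqrtQ)

lemma sqrtQ_inj: "sqrtQ x = 0 \<Longrightarrow> x = 0"
  using sqrtQ_square[of x] by (simp add: Q_inj)

lemma sqrtQ_resolvent: "c \<noteq> 0 \<Longrightarrow> sqrtQ (resolvent c x) = resolvent c (sqrtQ x)"
  by (rule sqrtQ_commute[OF bounded_linear_resolvent, symmetric])
    (simp_all add: resolvent_commute_op[OF _ Q_bl Q_comm])

lemma sqrtQ_cayley: "c \<noteq> 0 \<Longrightarrow> sqrtQ (cayley c x) = cayley c (sqrtQ x)"
  unfolding cayley_def by (simp add: sqrtQ.diff sqrtQ.scaleR sqrtQ_resolvent)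

lemma Q_S_commute_pos:
  assumes t: "0 < t" and y: "y \<in> DM"
  shows "Q (S t y) = S t (Q y)"
proof -
  define D where "D = Q (S t y) - S t (Q y)"
  define K where "K = onorm Q * ((2 + 4 * t) * norm (M y)) + (2 + 4 * t) * norm (M (Q y))"
  have bnd: "norm D \<le> K * sqrt (t / real n)" if n: "n \<ge> 1" for n
  proof -
    define tau where "tau = t / real n"
    have tau: "0 < tau" and nt: "real n * tau = t" unfolding tau_def using t n by simp_all
    let ?C = "cayley (tau/2) ^^ n"
    have QC: "Q (?C y) = ?C (Q y)"
      by (rule funpow_commute) (rule cayley_commute_op[OF _ Q_bl Q_comm], use tau in simp)
    have "D = Q (S t y - ?C y) - (S t (Q y) - ?C (Q y))"
      unfolding D_def by (simp add: Q.diff QC)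
    then have "norm D \<le> norm (Q (S t y - ?C y)) + norm (S t (Q y) - ?C (Q y))"
      by (simp add: norm_triangle_ineq4)
    also have "norm (Q (S t y - ?C y)) \<le> onorm Q * norm (S t y - ?C y)" by (rule onorm[OF Q_bl])
    also have "norm (S t y - ?C y) \<le> (2 + 4 * t) * sqrt tau * norm (M y)"
      using crank_nicolson_error_DM[OF y tau, of n] nt by simp
    also have "norm (S t (Q y) - ?C (Q y)) \<le> (2 + 4 * t) * sqrt tau * norm (M (Q y))"
      using crank_nicolson_error_DM[OF Q_DM[OF y] tau, of n] nt by simp
    finally have "norm D \<le> onorm Q * ((2 + 4 * t) * sqrt tau * norm (M y))
        + (2 + 4 * t) * sqrt tau * norm (M (Q y))"
      using onorm_pos_le[OF Q_bl] by (simp add: mult_left_mono)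
    also have "\<dots> = K * sqrt tau" unfolding K_def by (simp add: algebra_simps)
    finally show ?thesis unfolding tau_def .
  qed
  have lim: "(\<lambda>n. K * sqrt (t / real n)) \<longlonglongrightarrow> K * sqrt 0"
    by (intro tendsto_intros lim_const_over_n)
  have "norm D \<le> K * sqrt 0"
    by (rule LIMSEQ_le[OF tendsto_const lim]) (use bnd in blast)
  then show ?thesis unfolding D_def by simp
qed

lemma Q_S_commute_DM:
  assumes y: "y \<in> DM"
  shows "Q (S t y) = S t (Q y)"
proof (cases "0 < t")
  case True then show ?thesis by (rule Q_S_commute_pos[OF _ y])
next
  case False
  show ?thesis
  proof (cases "t = 0")
    case True then show ?thesis by (simp add: S_0)
  next
    case False
    then have t': "0 < - t" using \<open>\<not> 0 < t\<close> by simp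
    have "Q (S t y) = S t (S (-t) (Q (S t y)))" by (simp add: S_inv)
    also have "S (-t) (Q (S t y)) = Q (S (-t) (S t y))"
      using Q_S_commute_pos[OF t'] S_DM[OF y] by simp
    also have "S (-t) (S t y) = y" using S_inv[of "-t" y] by simp
    finally show ?thesis .
  qed
qed

lemma Q_S_commute: "Q (S t x) = S t (Q x)"
proof -
  let ?A = "{x. Q (S t x) = S t (Q x)}"
  have "closed ?A"
    by (intro closed_Collect_eq linear_continuous_on
        bounded_linear_compose[OF Q_bl bounded_linear_S] bounded_linear_compose[OF bounded_linear_S Q_bl])
  moreover have "DM \<subseteq> ?A" using Q_S_commute_DM by blast
  ultimately have "closure DM \<subseteq> ?A" by (rule closure_minimal[rotated])
  then show ?thesis using DM_dense by blast
qed

lemma sqrtQ_S_commute: "sqrtQ (S t x) = S t (sqrtQ x)"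
  by (rule sqrtQ_commute[OF bounded_linear_S, symmetric]) (simp add: Q_S_commute)

lemma QT_eq:
  assumes "0 \<le> T"
  shows "QT S Q T = (\<lambda>x. sqrt T *\<^sub>R sqrtQ (sqrt T *\<^sub>R sqrtQ x))"
proof
  fix x
  have "S r (Q (adj (S r) x)) = Q x" for r by (simp add: adj_S Q_S_commute[symmetric] S_inv)
  then show "QT S Q T x = sqrt T *\<^sub>R sqrtQ (sqrt T *\<^sub>R sqrtQ x)"
    unfolding QT_def using assms by (simp add: sqrtQ.scaleR sqrtQ_square)
qed

lemma rate_exact_eq:
  assumes T: "0 < T"
  shows "rate_exact S Q T (sqrtQ b) (sqrtQ a) = ereal ((1/2) * (norm (a - S T b))^2 / T)"
proof -
  let ?B = "\<lambda>u. sqrt T *\<^sub>R sqrtQ u"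
  have "rate (op_sqrt (\<lambda>x. ?B (?B x))) (?B ((1 / sqrt T) *\<^sub>R (a - S T b)))
      = ereal ((1/2) * (norm ((1 / sqrt T) *\<^sub>R (a - S T b)))^2)"
  proof (rule rate_op_sqrt_factorization)
    show "bounded_linear ?B"
      by (intro bounded_linear_compose[OF bounded_linear_scaleR_right] bounded_linear_sqrtQ)
    then show "bounded_linear ?B" .
    show "inner (?B u) z = inner u (?B z)" for u z using symmetric_sqrtQ by (simp add: symmetric_op_def)
    show "?B z = 0 \<Longrightarrow> z = 0" for z using T sqrtQ_inj by simp
    then show "?B z = 0 \<Longrightarrow> z = 0" for z .
  qed
  moreover have "?B ((1 / sqrt T) *\<^sub>R (a - S T b)) = sqrtQ a - S T (sqrtQ b)"
    using T by (simp add: sqrtQ.scaleR sqrtQ.diff sqrtQ_S_commute)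
  ultimately show ?thesis
    unfolding rate_exact_def QT_eq[OF less_imp_le[OF T]] using T
    by (simp add: power_mult_distrib power_divide)
qed

end

context commuting_noise
begin

definition noise_factor :: "real \<Rightarrow> real \<Rightarrow> 'v \<Rightarrow> 'v" where
  "noise_factor T c u = sqrt T *\<^sub>R resolvent c (sqrtQ u)"

lemma bounded_linear_noise_factor: "c \<noteq> 0 \<Longrightarrow> bounded_linear (noise_factor T c)"
  unfolding noise_factor_def[abs_def]
  by (intro bounded_linear_compose[OF bounded_linear_scaleR_right]
      bounded_linear_compose[OF bounded_linear_resolvent bounded_linear_sqrtQ])

lemma inner_noise_factor:
  "c \<noteq> 0 \<Longrightarrow> inner (noise_factor T c u) z = inner u (noise_factor T (-c) z)"
  using symmetric_sqrtQ unfolding noise_factor_def symmetric_op_def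
  by (simp add: inner_resolvent sqrtQ_resolvent)

lemma noise_factor_inj:
  assumes "c \<noteq> 0" "0 < T" "noise_factor T c z = 0"
  shows "z = 0"
proof -
  have "resolvent c (sqrtQ z) = 0" using assms unfolding noise_factor_def by simp
  then have "sqrtQ z = 0" using resolvent_eq[OF assms(1), of "sqrtQ z"] M_0 by simp
  then show ?thesis by (rule sqrtQ_inj)
qed

text \<open>Each summand of \<open>Q\<^sub>T\<^sub>;\<^sub>N\<close> equals \<open>T\<^sub>\<tau> Q T\<^sub>\<tau>\<^sup>*\<close>, because the Cayley transform
  \<open>S\<^sub>\<tau>\<close> is unitary and commutes with \<open>T\<^sub>\<tau>\<close> and \<open>Q\<close>.\<close>

lemma QTN_eq:
  assumes N: "N \<ge> 1" and T: "0 < T"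
  defines "c \<equiv> T / real N / 2"
  shows "QTN M DM Q T N = (\<lambda>x. noise_factor T c (noise_factor T (-c) x))"
proof
  fix x
  define tau where "tau = T / real N"
  have tau: "0 < tau" unfolding tau_def using N T by simp
  have c: "c \<noteq> 0" and c': "-c \<noteq> 0" and ctau: "tau / 2 = c" unfolding c_def tau_def using N T by auto
  define F where "F z = resolvent c (Q (resolvent (-c) z))" for z
  have Fc: "F (cayley c z) = cayley c (F z)" for z
    unfolding F_def
    by (simp add: resolvent_cayley_commute[OF c c'] cayley_commute_op[OF c Q_bl Q_comm]
        resolvent_cayley_commute[OF c c])
  have A: "((Stau M DM tau ^^ k) \<circ> Ttau M DM tau) = (\<lambda>u. (cayley c ^^ k) (resolvent c u))" for k
  proof
    fix u
    show "((Stau M DM tau ^^ k) \<circ> Ttau M DM tau) u = (cayley c ^^ k) (resolvent c u)"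
      using Stau_pow_eq_cayley_pow[of tau "resolvent c u" k] resolvent_in_DM[OF c] tau ctau
      by (simp add: Ttau_eq_resolvent)
  qed
  have adjA: "adj (\<lambda>u. (cayley c ^^ k) (resolvent c u)) z = resolvent (-c) ((cayley (-c) ^^ k) z)" for k z
    by (rule adj_eqI)
      (simp add: inner_funpow_adjoint[OF inner_cayley[OF c]] inner_resolvent[OF c])
  have summand: "(cayley c ^^ k) (resolvent c (Q (resolvent (-c) ((cayley (-c) ^^ k) z)))) = F z" for k z
  proof -
    have "(cayley c ^^ k) (F ((cayley (-c) ^^ k) z)) = F ((cayley c ^^ k) ((cayley (-c) ^^ k) z))"
      by (rule funpow_commute[symmetric]) (rule Fc)
    also have "(cayley c ^^ k) ((cayley (-c) ^^ k) z) = z"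
      by (rule funpow_left_inverse) (use cayley_inverse[OF c'] in simp)
    finally show ?thesis unfolding F_def .
  qed
  have "QTN M DM Q T N x = tau *\<^sub>R (\<Sum>j=1..N. F x)"
    unfolding QTN_def Let_def tau_def[symmetric] A adjA summand ..
  also have "\<dots> = T *\<^sub>R F x" using N by (simp add: tau_def sum_constant_scaleR)
  also have "\<dots> = noise_factor T c (noise_factor T (-c) x)"
  proof -
    interpret Rc: bounded_linear "resolvent c" by (rule bounded_linear_resolvent[OF c])
    show ?thesis unfolding F_def noise_factor_def using T
      by (simp add: sqrtQ.scaleR Rc.scaleR sqrtQ_resolvent[OF c', symmetric] sqrtQ_square)
  qed
  finally show "QTN M DM Q T N x = noise_factor T c (noise_factor T (-c) x)" .
qed

lemma rate_midpoint_eq: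
  assumes N: "N \<ge> 1" and T: "0 < T" and d: "d \<in> DM"
  defines "c \<equiv> T / real N / 2"
  shows "rate (op_sqrt (QTN M DM Q T N)) (sqrtQ d)
    = ereal ((1/2) * ((norm d)^2 + c^2 * (norm (M d))^2) / T)"
proof -
  have c: "c \<noteq> 0" and c': "-c \<noteq> 0" unfolding c_def using N T by auto
  define y where "y = (1 / sqrt T) *\<^sub>R (d - c *\<^sub>R M d)"
  interpret Rc: bounded_linear "resolvent c" by (rule bounded_linear_resolvent[OF c])
  have "noise_factor T c y = sqrtQ (resolvent c (d - c *\<^sub>R M d))"
    unfolding noise_factor_def y_def using T by (simp add: sqrtQ.scaleR Rc.scaleR sqrtQ_resolvent[OF c])
  also have "\<dots> = sqrtQ d" by (simp add: resolvent_id_minus_M[OF c d])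
  finally have y: "noise_factor T c y = sqrtQ d" .
  have "rate (op_sqrt (\<lambda>x. noise_factor T c (noise_factor T (-c) x))) (noise_factor T c y)
      = ereal ((1/2) * (norm y)^2)"
    by (rule rate_op_sqrt_factorization[OF bounded_linear_noise_factor[OF c]
        bounded_linear_noise_factor[OF c'] inner_noise_factor[OF c]
        noise_factor_inj[OF c T] noise_factor_inj[OF c' T]])
  then have "rate (op_sqrt (QTN M DM Q T N)) (sqrtQ d) = ereal ((1/2) * (norm y)^2)"
    by (simp only: QTN_eq[OF N T, folded c_def] y)
  also have "(norm y)^2 = ((norm d)^2 + c^2 * (norm (M d))^2) / T"
    unfolding y_def norm_id_minus_M_sq[OF d, symmetric] using T
    by (simp add: power_mult_distrib power_divide)
  finally show ?thesis by simp
qed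

lemma pinv_sqrtQ_range_Ttau:
  assumes c: "c \<noteq> 0" and "v \<in> range (Ttau M DM (2 * c) \<circ> sqrtQ)"
  shows "pinv sqrtQ v \<in> DM" and "sqrtQ (pinv sqrtQ v) = v" and "v \<in> DM"
proof -
  obtain x where v: "v = resolvent c (sqrtQ x)"
    using assms(2) unfolding resolvent_def by (auto simp del: Ttau_eq_resolvent)
  then show "v \<in> DM" using resolvent_in_DM[OF c] by simp
  have "sqrtQ (resolvent c x) = v" by (simp add: v sqrtQ_resolvent[OF c])
  moreover have "pinv sqrtQ v = resolvent c x"
    by (rule pinv_eqI[OF sqrtQ.linear]) (simp_all add: sqrtQ_inj v sqrtQ_resolvent[OF c])
  ultimately show "pinv sqrtQ v \<in> DM" and "sqrtQ (pinv sqrtQ v) = v"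
    using resolvent_in_DM[OF c] by simp_all
qed

end


section \<open>Comparison of the rate functions\<close>

lemma norm_le_graph_norm1: "norm x \<le> graph_norm1 M x" "norm (M x) \<le> graph_norm1 M x"
  unfolding graph_norm1_def by (auto intro!: real_le_rsqrt)

lemma norm_le_graph_norm2: "norm x \<le> graph_norm2 M x" "norm (M x) \<le> graph_norm2 M x"
  unfolding graph_norm2_def by (auto intro!: real_le_rsqrt)

lemma norm_M2_le_graph_norm2: "norm (M (M x)) \<le> graph_norm2 M x"
  unfolding graph_norm2_def by (auto intro!: real_le_rsqrt)

lemma half_square_difference_le:
  fixes X Y Z W s c T :: real
  assumes "0 \<le> X" "0 \<le> Y" "\<bar>X - Y\<bar> \<le> W" "X \<le> s" "Y \<le> s" "\<bar>Z\<bar> \<le> s" "0 < T"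
  shows "\<bar>(1/2) * X^2 / T - (1/2) * (Y^2 + c^2 * Z^2) / T\<bar> \<le> (W * 2 * s + c^2 * s^2) / (2 * T)"
proof -
  have "X^2 - Y^2 = (X - Y) * (X + Y)" by (simp add: power2_eq_square algebra_simps)
  then have "\<bar>X^2 - Y^2\<bar> = \<bar>X - Y\<bar> * (X + Y)" using assms(1,2) by (simp add: abs_mult)
  also have "\<dots> \<le> W * (2 * s)" using assms by (intro mult_mono) auto
  finally have "\<bar>X^2 - Y^2\<bar> \<le> W * 2 * s" by simp
  moreover have "c^2 * Z^2 \<le> c^2 * s^2"
  proof -
    have "0 \<le> s" using assms(6) abs_ge_zero order_trans by blast
    then have "Z^2 \<le> s^2" using assms(6) by (simp add: power2_le_iff_abs_le)
    then show ?thesis by (simp add: mult_left_mono)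
  qed
  moreover have "0 \<le> c^2 * Z^2" by simp
  ultimately have "\<bar>X^2 - (Y^2 + c^2 * Z^2)\<bar> \<le> W * 2 * s + c^2 * s^2" by linarith
  moreover have "(1/2) * X^2 / T - (1/2) * (Y^2 + c^2 * Z^2) / T = (X^2 - (Y^2 + c^2 * Z^2)) / (2 * T)"
    using assms(7) by (simp add: field_simps)
  ultimately show ?thesis using assms(7) by (simp add: abs_div divide_right_mono)
qed

lemma error_bound_rescale:
  fixes W h s e K L T :: real
  assumes "W \<le> K * e" "h \<le> L * e" "0 \<le> s" "0 < T"
  shows "(W * 2 * s + h * s^2) / (2 * T) \<le> (K * 2 * s + L * s^2) / (2 * T) * e"
proof -
  have "W * 2 * s + h * s^2 \<le> (K * e) * 2 * s + (L * e) * s^2"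
    using assms by (intro add_mono mult_right_mono) auto
  then show ?thesis using assms(4) by (simp add: divide_right_mono algebra_simps)
qed

context commuting_noise
begin

lemma rates_explicit:
  assumes N: "N \<ge> 1" and T: "0 < T"
    and v: "v \<in> range (Ttau M DM (T / real N) \<circ> sqrtQ)"
    and u: "u0 \<in> range (Ttau M DM (T / real N) \<circ> sqrtQ)"
  defines "c \<equiv> T / real N / 2" and "a \<equiv> pinv sqrtQ v" and "b \<equiv> pinv sqrtQ u0"
  shows "rate_exact S Q T u0 v = ereal ((1/2) * (norm (a - S T b))^2 / T)"
    and "rate_midpoint M DM Q T N u0 v = ereal ((1/2) * ((norm (a - (cayley c ^^ N) b))^2
          + c^2 * (norm (M (a - (cayley c ^^ N) b)))^2) / T)"
proof -
  have c: "c \<noteq> 0" and tau: "T / real N = 2 * c" unfolding c_def using N T by auto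
  note a = pinv_sqrtQ_range_Ttau[OF c v[unfolded tau], folded a_def]
  note b = pinv_sqrtQ_range_Ttau[OF c u[unfolded tau], folded b_def]
  show "rate_exact S Q T u0 v = ereal ((1/2) * (norm (a - S T b))^2 / T)"
    using rate_exact_eq[OF T, of b a] a(2) b(2) by simp
  have "(Stau M DM (T / real N) ^^ N) u0 = (cayley c ^^ N) u0"
    using Stau_pow_eq_cayley_pow[of "T / real N" u0 N] b(3) c by (simp add: tau)
  then have "v - (Stau M DM (T / real N) ^^ N) u0 = sqrtQ (a - (cayley c ^^ N) b)"
    using a(2) b(2)
    by (simp add: sqrtQ.diff funpow_commute[of sqrtQ "cayley c", OF sqrtQ_cayley[OF c]])
  moreover have "a - (cayley c ^^ N) b \<in> DM"
    using a(1) cayley_pow_DM[OF c b(1)] by (simp add: DM_diff)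
  ultimately show "rate_midpoint M DM Q T N u0 v = ereal ((1/2) * ((norm (a - (cayley c ^^ N) b))^2
      + c^2 * (norm (M (a - (cayley c ^^ N) b)))^2) / T)"
    unfolding rate_midpoint_def c_def by (simp add: rate_midpoint_eq[OF N T])
qed

lemma rate_difference_le:
  assumes N: "N \<ge> 1" and T: "0 < T"
    and v: "v \<in> range (Ttau M DM (T / real N) \<circ> sqrtQ)"
    and u: "u0 \<in> range (Ttau M DM (T / real N) \<circ> sqrtQ)"
    and p: "norm (pinv sqrtQ v) \<le> p" "norm (M (pinv sqrtQ v)) \<le> p"
    and q: "norm (pinv sqrtQ u0) \<le> q" "norm (M (pinv sqrtQ u0)) \<le> q"
  defines "c \<equiv> T / real N / 2"
  shows "\<bar>rate_exact S Q T u0 v - rate_midpoint M DM Q T N u0 v\<bar>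
    \<le> ereal ((norm (S T (pinv sqrtQ u0) - (cayley c ^^ N) (pinv sqrtQ u0)) * 2 * (p + q)
             + c^2 * (p + q)^2) / (2 * T))"
proof -
  have c: "c \<noteq> 0" and tau: "T / real N = 2 * c" unfolding c_def using N T by auto
  define a where "a = pinv sqrtQ v"
  define b where "b = pinv sqrtQ u0"
  have aD: "a \<in> DM" and bD: "b \<in> DM"
    using pinv_sqrtQ_range_Ttau(1)[OF c] v u unfolding a_def b_def tau by blast+
  let ?C = "cayley c ^^ N"
  have Cb: "?C b \<in> DM" "M (?C b) = ?C (M b)" using cayley_pow_DM[OF c bD] by auto
  define d where "d = a - ?C b"
  have "\<bar>norm (a - S T b) - norm d\<bar> \<le> norm (S T b - ?C b)"
    using norm_triangle_ineq3[of "a - S T b" d] unfolding d_def by (simp add: norm_minus_commute)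
  moreover have "norm (a - S T b) \<le> p + q"
    using norm_triangle_ineq4[of a "S T b"] p q unfolding a_def b_def by (simp add: norm_S)
  moreover have "norm d \<le> p + q"
    using norm_triangle_ineq4[of a "?C b"] p q unfolding a_def b_def d_def
    by (simp add: norm_cayley_pow[OF c])
  moreover have "\<bar>norm (M d)\<bar> \<le> p + q"
    using norm_triangle_ineq4[of "M a" "?C (M b)"] p q M_diff[OF aD Cb(1)] Cb(2)
    unfolding a_def b_def d_def by (simp add: norm_cayley_pow[OF c])
  ultimately show ?thesis
    using half_square_difference_le[OF norm_ge_zero norm_ge_zero _ _ _ _ T, of "a - S T b" d]
    unfolding rates_explicit[OF N T v u] a_def b_def d_def c_def by simp
qed

end

definition rate_error_const1 :: "real \<Rightarrow> real \<Rightarrow> real \<Rightarrow> real" where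
  "rate_error_const1 T p q = ((2 + 4 * T) * q * 2 * (p + q) + T * sqrt T / 4 * (p + q)^2) / (2 * T)"

definition rate_error_const2 :: "real \<Rightarrow> real \<Rightarrow> real \<Rightarrow> real" where
  "rate_error_const2 T p q = (4 * T * q * 2 * (p + q) + T / 4 * (p + q)^2) / (2 * T)"

context commuting_noise
begin

lemma rate_error_DM:
  assumes N: "N \<ge> 1" and T: "0 < T"
    and v: "v \<in> range (Ttau M DM (T / real N) \<circ> sqrtQ)"
    and u: "u0 \<in> range (Ttau M DM (T / real N) \<circ> sqrtQ)"
  shows "\<bar>rate_exact S Q T u0 v - rate_midpoint M DM Q T N u0 v\<bar>
    \<le> ereal (rate_error_const1 T (graph_norm1 M (pinv sqrtQ v)) (graph_norm1 M (pinv sqrtQ u0))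
              * sqrt (T / real N))"
proof -
  define tau where "tau = T / real N"
  define b where "b = pinv sqrtQ u0"
  let ?p = "graph_norm1 M (pinv sqrtQ v)" and ?q = "graph_norm1 M b"
  have tau: "0 < tau" "tau \<le> T" "real N * tau = T"
    unfolding tau_def using N T by (simp_all add: field_simps)
  have bD: "b \<in> DM"
    using pinv_sqrtQ_range_Ttau(1)[of "tau / 2" u0] tau u N unfolding b_def tau_def by simp
  have "norm (S T b - (cayley (tau / 2) ^^ N) b) \<le> (2 + 4 * T) * sqrt tau * norm (M b)"
    using crank_nicolson_error_DM[OF bD tau(1), of N] unfolding tau(3) .
  also have "\<dots> \<le> (2 + 4 * T) * ?q * sqrt tau"
    using norm_le_graph_norm1(2)[where x=b and M=M] T tau by (simp add: mult.commute mult_left_mono)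
  finally have W: "norm (S T b - (cayley (tau / 2) ^^ N) b) \<le> (2 + 4 * T) * ?q * sqrt tau" .
  have "tau * sqrt tau * sqrt tau \<le> T * sqrt T * sqrt tau"
    using tau by (intro mult_right_mono mult_mono) auto
  then have h: "(tau / 2)^2 \<le> T * sqrt T / 4 * sqrt tau"
    using tau by (simp add: power2_eq_square mult.assoc)
  have "0 \<le> ?p + ?q" unfolding graph_norm1_def by simp
  from error_bound_rescale[OF W h this T]
  have "(norm (S T b - (cayley (tau / 2) ^^ N) b) * 2 * (?p + ?q) + (tau / 2)^2 * (?p + ?q)^2) / (2 * T)
      \<le> rate_error_const1 T ?p ?q * sqrt tau"
    unfolding rate_error_const1_def .
  then show ?thesis
    by (intro order.trans[OF rate_difference_le[OF N T v u norm_le_graph_norm1 norm_le_graph_norm1]])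
      (simp add: b_def tau_def)
qed

lemma rate_error_DM2:
  assumes N: "N \<ge> 1" and T: "0 < T"
    and v: "v \<in> range (Ttau M DM (T / real N) \<circ> sqrtQ)"
    and u: "u0 \<in> range (Ttau M DM (T / real N) \<circ> sqrtQ)"
    and u2: "pinv sqrtQ u0 \<in> dom_M2 M DM"
  shows "\<bar>rate_exact S Q T u0 v - rate_midpoint M DM Q T N u0 v\<bar>
    \<le> ereal (rate_error_const2 T (graph_norm2 M (pinv sqrtQ v)) (graph_norm2 M (pinv sqrtQ u0))
              * (T / real N))"
proof -
  define tau where "tau = T / real N"
  define b where "b = pinv sqrtQ u0"
  let ?p = "graph_norm2 M (pinv sqrtQ v)" and ?q = "graph_norm2 M b"
  have tau: "0 < tau" "tau \<le> T" "real N * tau = T"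
    unfolding tau_def using N T by (simp_all add: field_simps)
  have "norm (S (real N * tau) b - (cayley (tau / 2) ^^ N) b) \<le> real N * (4 * tau^2 * norm (M (M b)))"
    using crank_nicolson_error_DM2[OF _ _ tau(1)] u2 unfolding b_def dom_M2_def by simp
  also have "\<dots> = 4 * (real N * tau) * norm (M (M b)) * tau" by (simp add: power2_eq_square)
  also have "\<dots> \<le> 4 * T * ?q * tau"
    using norm_M2_le_graph_norm2[where x=b and M=M] tau by (simp add: mult_left_mono mult_right_mono)
  finally have W: "norm (S T b - (cayley (tau / 2) ^^ N) b) \<le> 4 * T * ?q * tau"
    using tau(3) by simp
  have h: "(tau / 2)^2 \<le> T / 4 * tau"
    using tau by (simp add: power2_eq_square mult_right_mono)
  have "0 \<le> ?p + ?q" unfolding graph_norm2_def by simp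
  from error_bound_rescale[OF W h this T]
  have "(norm (S T b - (cayley (tau / 2) ^^ N) b) * 2 * (?p + ?q) + (tau / 2)^2 * (?p + ?q)^2) / (2 * T)
      \<le> rate_error_const2 T ?p ?q * tau"
    unfolding rate_error_const2_def .
  then show ?thesis
    by (intro order.trans[OF rate_difference_le[OF N T v u norm_le_graph_norm2 norm_le_graph_norm2]])
      (simp add: b_def tau_def)
qed

end

theorem proposition3p6:
  fixes M :: "'v::{real_inner,complete_space} \<Rightarrow> 'v" and DM :: "'v set"
    and S :: "real \<Rightarrow> 'v \<Rightarrow> 'v" and Q :: "'v \<Rightarrow> 'v" and T :: real
  assumes T_pos: "T > 0"
    and skew: "skew_adjoint M DM"
    and group: "unitary_group_generated_by S M DM"
    and Q_bl: "bounded_linear Q" and Q_sym: "symmetric_op Q" and Q_pd: "pos_def_op Q"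
    and Q_tr: "trace_class_pos Q"
    and Q_comm: "commutes_with Q M DM"
  shows
    "(\<exists>C :: real \<Rightarrow> real \<Rightarrow> real. \<forall>N::nat. \<forall>v u0.
        N \<ge> 1 \<longrightarrow>
        v \<in> range (Ttau M DM (T / real N) \<circ> op_sqrt Q) \<longrightarrow>
        u0 \<in> range (Ttau M DM (T / real N) \<circ> op_sqrt Q) \<longrightarrow>
        \<bar>rate_exact S Q T u0 v - rate_midpoint M DM Q T N u0 v\<bar>
          \<le> ereal (C (graph_norm1 M (pinv (op_sqrt Q) v)) (graph_norm1 M (pinv (op_sqrt Q) u0))
                    * sqrt (T / real N)))
   \<and> (\<exists>C :: real \<Rightarrow> real \<Rightarrow> real. \<forall>N::nat. \<forall>v u0.
        N \<ge> 1 \<longrightarrow>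
        v \<in> range (Ttau M DM (T / real N) \<circ> op_sqrt Q) \<longrightarrow>
        u0 \<in> range (Ttau M DM (T / real N) \<circ> op_sqrt Q) \<longrightarrow>
        pinv (op_sqrt Q) v \<in> dom_M2 M DM \<longrightarrow>
        pinv (op_sqrt Q) u0 \<in> dom_M2 M DM \<longrightarrow>
        \<bar>rate_exact S Q T u0 v - rate_midpoint M DM Q T N u0 v\<bar>
          \<le> ereal (C (graph_norm2 M (pinv (op_sqrt Q) v)) (graph_norm2 M (pinv (op_sqrt Q) u0))
                    * (T / real N)))"
proof -
  interpret commuting_noise M DM S Q
    by (rule commuting_noise.intro[OF skew_group.intro[OF skew_op.intro[OF skew]
          skew_group_axioms.intro[OF group]] commuting_noise_axioms.intro[OF Q_bl Q_sym Q_pd Q_comm]])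
  show ?thesis
    by (intro conjI exI[of _ "rate_error_const1 T"] exI[of _ "rate_error_const2 T"] allI impI
        rate_error_DM[OF _ T_pos] rate_error_DM2[OF _ T_pos]) assumption+
qed

end
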